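(* There is a polynomial-time algorithm that, given an approval-based election $E=(C,V)$, computes the unique smallest winning committee of $E$ under the NAV rule. Moreover, there is a polynomial-time algorithm that, given $E$ and an integer $k$, computes a NAV winning committee of size exactly $k$ if one exists (and reports that none exists otherwise).
   Context: An approval-based election $E=(C,V)$ consists of a finite set $C$ of candidates and a list $V=(v_1,\dots,v_n)$ of voters, each identified with its approval ballot $v_i\subseteq C$. For $S\subseteq C$ write $\overline{S}=C\setminus S$. The NAV score of a committee $S\subseteq C$ is $\sum_{i=1}^n\big(|S\cap v_i|-|S\cap\overline{v_i}|\big)$, and the NAV rule outputs all committees of maximum NAV score (these tie as co-winners). *)

theory Defs
  imports Main
begin

definition nav_score :: "'a set \<Rightarrow> 'a set list \<Rightarrow> 'a set \<Rightarrow> int" where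
  "nav_score C V S =
     (\<Sum>v\<leftarrow>V. int (card (S \<inter> v)) - int (card (S \<inter> (C - v))))"

definition nav_winner :: "'a set \<Rightarrow> 'a set list \<Rightarrow> 'a set \<Rightarrow> bool" where
  "nav_winner C V S \<longleftrightarrow> S \<subseteq> C \<and> (\<forall>T. T \<subseteq> C \<longrightarrow> nav_score C V T \<le> nav_score C V S)"

definition valid_election :: "nat \<Rightarrow> nat set list \<Rightarrow> bool" where
  "valid_election m V \<longleftrightarrow> (\<forall>v\<in>set V. v \<subseteq> {0..<m})"

datatype instr =
    Const nat nat
  | Add nat nat nat
  | Sub nat nat nat
  | Load nat nat
  | Store nat nat
  | Jz nat nat
  | Halt

type_synonym config = "nat \<times> (nat \<Rightarrow> nat)"

definition halted :: "instr list \<Rightarrow> config \<Rightarrow> bool" where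
  "halted P c \<longleftrightarrow> fst c \<ge> length P \<or> P ! fst c = Halt"

fun exec_instr :: "instr \<Rightarrow> config \<Rightarrow> config" where
  "exec_instr (Const r k) (pc, mem) = (Suc pc, mem(r := k))"
| "exec_instr (Add r a b) (pc, mem) = (Suc pc, mem(r := mem a + mem b))"
| "exec_instr (Sub r a b) (pc, mem) = (Suc pc, mem(r := mem a - mem b))"
| "exec_instr (Load r a) (pc, mem) = (Suc pc, mem(r := mem (mem a)))"
| "exec_instr (Store a r) (pc, mem) = (Suc pc, mem(mem a := mem r))"
| "exec_instr (Jz r l) (pc, mem) = (if mem r = 0 then l else Suc pc, mem)"
| "exec_instr Halt c = c"

definition step :: "instr list \<Rightarrow> config \<Rightarrow> config" where
  "step P c = (if halted P c then c else exec_instr (P ! fst c) c)"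

definition runs_within :: "instr list \<Rightarrow> (nat \<Rightarrow> nat) \<Rightarrow> nat \<Rightarrow> (nat \<Rightarrow> nat) \<Rightarrow> bool" where
  "runs_within P mem0 t mem \<longleftrightarrow>
     halted P ((step P ^^ t) (0, mem0)) \<and> snd ((step P ^^ t) (0, mem0)) = mem"

text \<open>Election with candidates 0..<m and ballots V: mem 0 = m, mem 1 = number of voters,
  and the m*n approval bit-matrix stored from address off on
  (entry for voter i and candidate c at address off + i*m + c); all other cells 0
  (except those set explicitly, e.g. k at address 2).\<close>
definition enc_election :: "nat \<Rightarrow> nat \<Rightarrow> nat set list \<Rightarrow> nat \<Rightarrow> nat" where
  "enc_election off m V a =
     (if a = 0 then m
      else if a = 1 then length V
      else if off \<le> a \<and> a < off + length V * m then
        (if (a - off) mod m \<in> V ! ((a - off) div m) then 1 else 0)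
      else 0)"

definition dec_committee :: "nat \<Rightarrow> nat \<Rightarrow> (nat \<Rightarrow> nat) \<Rightarrow> nat set" where
  "dec_committee off m mem = {c. c < m \<and> mem (off + c) \<noteq> 0}"

text \<open>Size of the input: the approval matrix plus the candidate list.\<close>
definition election_size :: "nat \<Rightarrow> nat set list \<Rightarrow> nat" where
  "election_size m V = (m + 1) * (length V + 1)"

end

theory Submission
  imports Defs
begin

text \<open>NAV scores are additive: the score of a committee is the sum of the weights
  \<open>2 \<cdot> approvals c - n\<close> of its members. Hence the winning committees are exactly the sets lying
  between the candidates of positive weight and those of non-negative weight. The smallest winner
  consists of the positive-weight candidates, and a winner of size \<open>k\<close> exists iff \<open>k\<close> lies between
  the sizes of these two sets; one is then obtained by adding the first zero-weight candidates.

  Both algorithms are programs for the unit-cost RAM that count approvals column by column in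
  \<open>O(n m)\<close> steps and then select candidates in \<open>O(m)\<close> steps. Since the input occupies the memory
  from the first work register onwards, the programs start by packing the first few input cells
  into cell 1 and relocating the approval matrix above the work registers; at the end the output
  is shifted down to the addresses where it is read.\<close>

section \<open>NAV winners\<close>

definition approvals :: "'a set list \<Rightarrow> 'a \<Rightarrow> nat" where
  "approvals V c = length (filter (\<lambda>v. c \<in> v) V)"

definition nav_weight :: "'a set list \<Rightarrow> 'a \<Rightarrow> int" where
  "nav_weight V c = 2 * int (approvals V c) - int (length V)"

lemma nav_score_eq_sum_weight:
  assumes "S \<subseteq> C" "finite S"
  shows "nav_score C V S = (\<Sum>c\<in>S. nav_weight V c)"
proof (induction V)
  case Nil
  then show ?case by (simp add: nav_score_def nav_weight_def approvals_def)
next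
  case (Cons v V)
  have "S \<inter> (C - v) = S - v"
    using assms(1) by blast
  then have "nav_score C (v # V) S = int (card (S \<inter> v)) - int (card (S - v)) + nav_score C V S"
    by (simp add: nav_score_def)
  also have "int (card (S \<inter> v)) - int (card (S - v)) = (\<Sum>c\<in>S. if c \<in> v then 1 else -1)"
    using assms(2) by (simp add: sum.If_cases Diff_eq)
  also have "(\<Sum>c\<in>S. if c \<in> v then 1 else -1) + nav_score C V S = (\<Sum>c\<in>S. nav_weight V c + (if c \<in> v then 1 else -1))"
    by (simp add: Cons sum.distrib)
  also have "\<dots> = (\<Sum>c\<in>S. nav_weight (v # V) c)"
    by (rule sum.cong) (auto simp: nav_weight_def approvals_def)
  finally show ?case .
qed

definition pos_weight :: "'a set \<Rightarrow> 'a set list \<Rightarrow> 'a set" where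
  "pos_weight C V = {c \<in> C. 0 < nav_weight V c}"

definition nonneg_weight :: "'a set \<Rightarrow> 'a set list \<Rightarrow> 'a set" where
  "nonneg_weight C V = {c \<in> C. 0 \<le> nav_weight V c}"

lemma pos_weight_subset_nonneg_weight: "pos_weight C V \<subseteq> nonneg_weight C V"
  by (auto simp: pos_weight_def nonneg_weight_def)

lemma nav_winner_iff:
  assumes "finite C"
  shows "nav_winner C V S \<longleftrightarrow> pos_weight C V \<subseteq> S \<and> S \<subseteq> nonneg_weight C V"
proof
  assume W: "nav_winner C V S"
  then have SC: "S \<subseteq> C" and opt: "\<And>T. T \<subseteq> C \<Longrightarrow> nav_score C V T \<le> nav_score C V S"
    by (auto simp: nav_winner_def)
  have fin: "finite T" if "T \<subseteq> C" for T
    using assms that by (rule finite_subset[rotated])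
  have "c \<in> S" if c: "c \<in> pos_weight C V" for c
  proof (rule ccontr)
    assume "c \<notin> S"
    have "insert c S \<subseteq> C" using c SC by (auto simp: pos_weight_def)
    then have "nav_score C V (insert c S) = nav_weight V c + nav_score C V S"
      using \<open>c \<notin> S\<close> SC fin by (simp add: nav_score_eq_sum_weight)
    then show False using opt[OF \<open>insert c S \<subseteq> C\<close>] c by (simp add: pos_weight_def)
  qed
  moreover have "c \<in> nonneg_weight C V" if c: "c \<in> S" for c
  proof (rule ccontr)
    assume "c \<notin> nonneg_weight C V"
    have "S - {c} \<subseteq> C" using SC by blast
    then have "nav_score C V S = nav_weight V c + nav_score C V (S - {c})"
      using c SC fin by (simp add: nav_score_eq_sum_weight sum.remove)
    then show False using opt[of "S - {c}"] \<open>c \<notin> _\<close> c SC by (auto simp: nonneg_weight_def)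
  qed
  ultimately show "pos_weight C V \<subseteq> S \<and> S \<subseteq> nonneg_weight C V" by blast
next
  assume S: "pos_weight C V \<subseteq> S \<and> S \<subseteq> nonneg_weight C V"
  then have SC: "S \<subseteq> C" by (auto simp: nonneg_weight_def)
  have fin: "finite T" if "T \<subseteq> C" for T
    using assms that by (rule finite_subset[rotated])
  have "(\<Sum>c\<in>T. nav_weight V c) \<le> (\<Sum>c\<in>S. nav_weight V c)" if T: "T \<subseteq> C" for T
  proof -
    have "(\<Sum>c\<in>T - pos_weight C V. nav_weight V c) \<le> 0"
      using T by (intro sum_nonpos) (auto simp: pos_weight_def)
    then have "(\<Sum>c\<in>T. nav_weight V c) \<le> (\<Sum>c\<in>T \<inter> pos_weight C V. nav_weight V c)"
      using fin[OF T] by (simp add: sum.Int_Diff[of T _ "pos_weight C V"])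
    also have "\<dots> \<le> (\<Sum>c\<in>pos_weight C V. nav_weight V c)"
      using assms by (intro sum_mono2) (auto simp: pos_weight_def)
    also have "\<dots> = (\<Sum>c\<in>S. nav_weight V c)"
      using S fin[OF SC] by (intro sum.mono_neutral_left) (auto simp: pos_weight_def nonneg_weight_def)
    finally show ?thesis .
  qed
  then show "nav_winner C V S"
    using SC fin by (simp add: nav_winner_def nav_score_eq_sum_weight)
qed

lemma nav_winner_pos_weight:
  "finite C \<Longrightarrow> nav_winner C V (pos_weight C V)"
  using pos_weight_subset_nonneg_weight by (simp add: nav_winner_iff)

lemma nav_winner_card_le_pos_weight:
  assumes "finite C" "nav_winner C V T" "card T \<le> card (pos_weight C V)"
  shows "T = pos_weight C V"
proof -
  have "pos_weight C V \<subseteq> T" "T \<subseteq> C"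
    using assms(1,2) by (auto simp: nav_winner_iff nonneg_weight_def)
  then show ?thesis
    using assms(1,3) card_seteq finite_subset by metis
qed

lemma ex_nav_winner_card_iff:
  assumes "finite C"
  shows "(\<exists>S. nav_winner C V S \<and> card S = k) \<longleftrightarrow>
    card (pos_weight C V) \<le> k \<and> k \<le> card (nonneg_weight C V)"
proof
  assume "\<exists>S. nav_winner C V S \<and> card S = k"
  then obtain S where "pos_weight C V \<subseteq> S" "S \<subseteq> nonneg_weight C V" "card S = k"
    using assms by (auto simp: nav_winner_iff)
  moreover have "finite (nonneg_weight C V)"
    using assms by (simp add: nonneg_weight_def)
  ultimately show "card (pos_weight C V) \<le> k \<and> k \<le> card (nonneg_weight C V)"
    by (metis card_mono finite_subset)
next
  assume k: "card (pos_weight C V) \<le> k \<and> k \<le> card (nonneg_weight C V)"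
  have fin: "finite (nonneg_weight C V)" "finite (pos_weight C V)"
    using assms by (simp_all add: nonneg_weight_def pos_weight_def)
  have "k - card (pos_weight C V) \<le> card (nonneg_weight C V - pos_weight C V)"
    using k card_Diff_subset[OF fin(2) pos_weight_subset_nonneg_weight] by linarith
  then obtain X where X: "X \<subseteq> nonneg_weight C V - pos_weight C V" "card X = k - card (pos_weight C V)"
    by (meson obtain_subset_with_card_n)
  then have "card (pos_weight C V \<union> X) = k"
    using k fin by (subst card_Un_disjoint) (auto intro: finite_subset)
  moreover have "nav_winner C V (pos_weight C V \<union> X)"
    using assms X(1) pos_weight_subset_nonneg_weight[of C V] by (auto simp: nav_winner_iff)
  ultimately show "\<exists>S. nav_winner C V S \<and> card S = k" by blast
qed

lemma card_less_Suc_filter: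
  "card {c'. c' < Suc c \<and> Q c'} = card {c'. c' < c \<and> Q c'} + (if Q c then 1 else 0)"
proof -
  have "{c'. c' < Suc c \<and> Q c'} = {c'. c' < c \<and> Q c'} \<union> (if Q c then {c} else {})"
    by (auto simp: less_Suc_eq)
  then show ?thesis by (simp add: card_insert_if)
qed

lemma card_filter_rank_less:
  "card {c. c < (M::nat) \<and> Q c \<and> card {c'. c' < c \<and> Q c'} < j} = min j (card {c. c < M \<and> Q c})"
proof (induction M)
  case (Suc M)
  have "{c. c < Suc M \<and> Q c \<and> card {c'. c' < c \<and> Q c'} < j} =
      {c. c < M \<and> Q c \<and> card {c'. c' < c \<and> Q c'} < j} \<union>
      (if Q M \<and> card {c'. c' < M \<and> Q c'} < j then {M} else {})"
    "{c. c < Suc M \<and> Q c} = {c. c < M \<and> Q c} \<union> (if Q M then {M} else {})"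
    by (auto simp: less_Suc_eq)
  then show ?case using Suc by (auto simp: card_insert_if)
qed simp

definition fill_committee :: "nat \<Rightarrow> nat set list \<Rightarrow> nat \<Rightarrow> nat set" where
  "fill_committee m V j = pos_weight {0..<m} V \<union>
     {c. c < m \<and> nav_weight V c = 0 \<and> card {c'. c' < c \<and> nav_weight V c' = 0} < j}"

lemma nav_winner_fill_committee: "nav_winner {0..<m} V (fill_committee m V j)"
  by (auto simp: nav_winner_iff fill_committee_def pos_weight_def nonneg_weight_def)

lemma card_zero_weight:
  "card {c. c < (m::nat) \<and> nav_weight V c = 0} =
     card (nonneg_weight {0..<m} V) - card (pos_weight {0..<m} V)"
proof -
  have "{c. c < m \<and> nav_weight V c = 0} = nonneg_weight {0..<m} V - pos_weight {0..<m} V"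
    by (auto simp: nonneg_weight_def pos_weight_def)
  also have "card \<dots> = card (nonneg_weight {0..<m} V) - card (pos_weight {0..<m} V)"
    using pos_weight_subset_nonneg_weight by (rule card_Diff_subset[rotated]) (simp add: pos_weight_def)
  finally show ?thesis .
qed

lemma card_fill_committee:
  "card (fill_committee m V j) =
     card (pos_weight {0..<m} V) + min j (card {c. c < m \<and> nav_weight V c = 0})"
  unfolding fill_committee_def
  by (subst card_Un_disjoint) (auto simp: pos_weight_def card_filter_rank_less)

lemma fill_committee_card_eq:
  assumes "card (pos_weight {0..<m} V) \<le> k" "k \<le> card (nonneg_weight {0..<m} V)"
  shows "card (fill_committee m V (k - card (pos_weight {0..<m} V))) = k"
  using assms by (simp add: card_fill_committee card_zero_weight)

section \<open>Reasoning about RAM programs\<close>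

definition code_at :: "instr list \<Rightarrow> nat \<Rightarrow> instr list \<Rightarrow> bool" where
  "code_at P pc is \<longleftrightarrow> pc + length is \<le> length P \<and> (\<forall>j<length is. P ! (pc + j) = is ! j)"

lemma code_at_Nil [simp]: "code_at P pc [] \<longleftrightarrow> pc \<le> length P"
  by (simp add: code_at_def)

lemma code_at_Cons:
  "code_at P pc (i # is) \<longleftrightarrow> pc < length P \<and> P ! pc = i \<and> code_at P (Suc pc) is"
  by (auto simp: code_at_def nth_Cons' less_Suc_eq_0_disj all_conj_distrib)

lemma code_at_le_length: "code_at P pc is \<Longrightarrow> pc \<le> length P"
  by (simp add: code_at_def)

lemma code_at_append:
  "code_at P pc (xs @ ys) \<longleftrightarrow> code_at P pc xs \<and> code_at P (pc + length xs) ys"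
  by (induction xs arbitrary: pc) (auto simp: code_at_Cons dest: code_at_le_length)

lemma code_at_self: "code_at P 0 P"
  by (simp add: code_at_def)

lemma step_code_at:
  assumes "code_at P pc blk" "pc \<le> q" "q - pc < length blk" "blk ! (q - pc) \<noteq> Halt"
  shows "step P (q, mem) = exec_instr (blk ! (q - pc)) (q, mem)"
proof -
  obtain j where "q = pc + j" using assms(2) le_Suc_ex by blast
  then show ?thesis using assms by (simp add: code_at_def step_def halted_def)
qed

lemma halted_code_at_Halt: "code_at P pc [Halt] \<Longrightarrow> halted P (pc, mem)"
  by (simp add: code_at_Cons halted_def)

lemma funpow_numeral: "(f :: 'a \<Rightarrow> 'a) ^^ numeral k = f \<circ> f ^^ pred_numeral k"
  by (simp add: numeral_eq_Suc)

lemma funpow_one: "(f :: 'a \<Rightarrow> 'a) ^^ 1 = f"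
  by simp

definition reaches :: "instr list \<Rightarrow> config \<Rightarrow> nat \<Rightarrow> config \<Rightarrow> bool" where
  "reaches P c T c' \<longleftrightarrow> (\<exists>t\<le>T. (step P ^^ t) c = c')"

lemma reachesI: "(step P ^^ t) c = c' \<Longrightarrow> t \<le> T \<Longrightarrow> reaches P c T c'"
  by (auto simp: reaches_def)

lemma reaches_exact: "(step P ^^ t) c = c' \<Longrightarrow> reaches P c t c'"
  by (auto simp: reaches_def)

lemma reaches_refl: "reaches P c 0 c"
  by (auto simp: reaches_def)

lemma reaches_trans:
  assumes "reaches P c T1 c'" "reaches P c' T2 c''"
  shows "reaches P c (T1 + T2) c''"
proof -
  obtain t1 t2 where "t1 \<le> T1" "(step P ^^ t1) c = c'" "t2 \<le> T2" "(step P ^^ t2) c' = c''"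
    using assms by (auto simp: reaches_def)
  then show ?thesis
    by (intro reachesI[where t="t2 + t1"]) (auto simp: funpow_add)
qed

lemma reaches_halt_runs_within:
  assumes "reaches P (0, mem0) T (pc, mem)" "code_at P pc [Halt]"
  shows "\<exists>t\<le>T. runs_within P mem0 t mem"
  using assms halted_code_at_Halt by (auto simp: reaches_def runs_within_def)

fun exec_mem :: "instr \<Rightarrow> (nat \<Rightarrow> nat) \<Rightarrow> nat \<Rightarrow> nat" where
  "exec_mem (Const r k) mem = mem(r := k)"
| "exec_mem (Add r a b) mem = mem(r := mem a + mem b)"
| "exec_mem (Sub r a b) mem = mem(r := mem a - mem b)"
| "exec_mem (Load r a) mem = mem(r := mem (mem a))"
| "exec_mem (Store a r) mem = mem(mem a := mem r)"
| "exec_mem _ mem = mem"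

fun straight :: "instr \<Rightarrow> bool" where
  "straight (Jz r l) = False"
| "straight Halt = False"
| "straight _ = True"

lemma reaches_straight:
  "code_at P pc is \<Longrightarrow> list_all straight is \<Longrightarrow>
   reaches P (pc, mem) (length is) (pc + length is, fold exec_mem is mem)"
proof (induction "is" arbitrary: pc mem)
  case Nil
  then show ?case by (simp add: reaches_refl)
next
  case (Cons i "is")
  then have "step P (pc, mem) = (Suc pc, exec_mem i mem)"
    by (cases i) (auto simp: code_at_Cons step_def halted_def)
  then have "reaches P (pc, mem) 1 (Suc pc, exec_mem i mem)"
    by (intro reachesI[where t=1]) auto
  from reaches_trans[OF this Cons.IH] Cons.prems show ?case
    by (simp add: code_at_Cons)
qed

lemma reaches_loop:
  assumes body: "\<And>k mem. k < N \<Longrightarrow> I k mem \<Longrightarrow> \<exists>mem'. reaches P (h, mem) T (h, mem') \<and> I (Suc k) mem'"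
    and exit: "\<And>mem. I N mem \<Longrightarrow> \<exists>mem'. reaches P (h, mem) T' (e, mem') \<and> Q mem'"
    and start: "I 0 mem"
  shows "\<exists>mem'. reaches P (h, mem) (N * T + T') (e, mem') \<and> Q mem'"
proof -
  have "\<exists>mem'. reaches P (h, mem) ((N - k) * T + T') (e, mem') \<and> Q mem'"
    if "I k mem" "k \<le> N" for k mem
    using that
  proof (induction "N - k" arbitrary: k mem)
    case 0
    then show ?case using exit by auto
  next
    case (Suc d)
    then obtain mem1 where 1: "reaches P (h, mem) T (h, mem1)" "I (Suc k) mem1"
      using body by (metis Suc_le_eq diff_is_0_eq nat.distinct(1) nat_less_le)
    obtain mem2 where 2: "reaches P (h, mem1) ((N - Suc k) * T + T') (e, mem2)" "Q mem2"
      using Suc 1(2) by (metis Suc_diff_Suc Suc_leI diff_Suc_1 zero_less_Suc zero_less_diff)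
    have "N - k = Suc (N - Suc k)"
      using Suc.hyps(2) by simp
    then have "T + ((N - Suc k) * T + T') = (N - k) * T + T'"
      by simp
    then show ?case using reaches_trans[OF 1(1) 2(1)] 2(2) by metis
  qed
  then show ?thesis using start by fastforce
qed

section \<open>Counting approvals\<close>

text \<open>Register map of the programs below (\<open>g \<ge> 2\<close> is the first address not used by the fixed
  input cells): \<open>g\<close> holds 0 (so \<open>Jz g\<close> is an unconditional jump), \<open>g+1\<close> holds 1, \<open>g+2\<close> the number
  \<open>n\<close> of voters, \<open>g+12\<close> the start \<open>Cb\<close> of the block of approval counts, and \<open>g+21\<close>, \<open>g+22\<close> the start
  and length of the output block. As the approval matrix also starts at \<open>g\<close>, its first \<open>R\<close> cells
  are first packed into cell 1 as \<open>n \<cdot> 2^R + bits\<close> and the matrix is then relocated to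
  \<open>B = n \<cdot> m + g + R\<close>.\<close>

definition pack_prog :: "nat \<Rightarrow> nat \<Rightarrow> instr list" where
  "pack_prog g R = concat (map (\<lambda>j. [Add 1 1 1, Add 1 1 (g+j)]) [0..<R])"

lemma pack_prog_Suc: "pack_prog g (Suc j) = pack_prog g j @ [Add 1 1 1, Add 1 1 (g+j)]"
  by (simp add: pack_prog_def)

lemma pack_prog_0: "pack_prog g 0 = []" by (simp add: pack_prog_def)

lemma length_pack_prog [simp]: "length (pack_prog g R) = 2 * R"
  by (induction R) (simp_all add: pack_prog_0 pack_prog_Suc)

lemma pack_prog_straight: "list_all straight (pack_prog g R)"
  by (simp add: pack_prog_def list_all_iff)

primrec horner :: "(nat \<Rightarrow> nat) \<Rightarrow> nat \<Rightarrow> nat" where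
  "horner b 0 = 0"
| "horner b (Suc j) = 2 * horner b j + b j"

lemma fold_pack_prog: "2 \<le> g \<Longrightarrow> fold exec_mem (pack_prog g j) mem = mem(1 := 2^j * mem 1 + horner (\<lambda>i. mem (g+i)) j)"
proof (induction j)
  case 0 then show ?case by (simp add: pack_prog_def)
next
  case (Suc j)
  have e: "2 ^ Suc j * mem 1 + horner (\<lambda>i. mem (g+i)) (Suc j) =
     (2 ^ j * mem 1 + horner (\<lambda>i. mem (g+i)) j) + (2 ^ j * mem 1 + horner (\<lambda>i. mem (g+i)) j) + mem (g+j)"
    by simp
  have ne: "g + j \<noteq> 1" using Suc.prems by simp
  show ?case using Suc ne by (simp only: pack_prog_Suc fold_append comp_apply e) (simp add: fun_eq_iff)
qed

lemma pack_prog_correct: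
  assumes "code_at P pc (pack_prog g R)" "2 \<le> g"
  shows "reaches P (pc, mem) (2*R) (pc + 2*R, mem(1 := 2^R * mem 1 + horner (\<lambda>i. mem (g+i)) R))"
  using reaches_straight[OF assms(1) pack_prog_straight, of mem] fold_pack_prog[OF assms(2)] by simp

definition suffix_value :: "(nat \<Rightarrow> nat) \<Rightarrow> nat \<Rightarrow> nat \<Rightarrow> nat" where
  "suffix_value b R j = (\<Sum>i = j..<R. b i * 2^(R - 1 - i))"

lemma horner_eq_sum: "horner b j = (\<Sum>i<j. b i * 2^(j - 1 - i))"
proof (induction j)
  case 0 then show ?case by simp
next
  case (Suc j)
  have "(\<Sum>i<j. b i * 2^(Suc j - 1 - i)) = 2 * (\<Sum>i<j. b i * 2^(j - 1 - i))"
    unfolding sum_distrib_left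
  proof (rule sum.cong)
    fix x assume "x \<in> {..<j}"
    hence "Suc j - 1 - x = Suc (j - 1 - x)" by auto
    thus "b x * 2 ^ (Suc j - 1 - x) = 2 * (b x * 2 ^ (j - 1 - x))" by simp
  qed simp
  then show ?case using Suc by simp
qed

lemma horner_eq_suffix_value: "horner b R = suffix_value b R 0"
  by (simp add: horner_eq_sum suffix_value_def atLeast0LessThan)

lemma suffix_value_split: "j < R \<Longrightarrow> suffix_value b R j = b j * 2^(R - 1 - j) + suffix_value b R (Suc j)"
  unfolding suffix_value_def by (simp add: sum.atLeast_Suc_lessThan)

lemma suffix_value_less: assumes "\<And>i. b i \<le> 1" shows "suffix_value b R j < 2^(R - j)"
proof (induction "R - j" arbitrary: j)
  case 0 then show ?case by (simp add: suffix_value_def)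
next
  case (Suc d)
  then have jR: "j < R" by simp
  have "suffix_value b R (Suc j) < 2^(R - Suc j)" using Suc.hyps(1)[of "Suc j"] Suc.hyps(2) by simp
  moreover have "b j * 2^(R - 1 - j) \<le> 2^(R - 1 - j)" using assms[of j] by simp
  moreover have "(2::nat)^(R - j) = 2^(R - 1 - j) + 2^(R - Suc j)"
  proof -
    have "R - j = Suc (R - Suc j)" "R - 1 - j = R - Suc j" using jR by simp_all
    thus ?thesis by simp
  qed
  ultimately show ?case using suffix_value_split[OF jR, of b] by linarith
qed

definition divmod_prog :: "nat \<Rightarrow> nat \<Rightarrow> nat \<Rightarrow> instr list" where
  "divmod_prog g R pc = [Const g 0, Const (g+1) 1, Const (g+2) 0, Const (g+3) (2^R),
    Add (g+4) 1 (g+1), Sub (g+4) (g+4) (g+3), Jz (g+4) (pc+10),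
    Sub 1 1 (g+3), Add (g+2) (g+2) (g+1), Jz g (pc+4)]"

lemma length_divmod_prog [simp]: "length (divmod_prog g R pc) = 10" by (simp add: divmod_prog_def)

lemma divmod_prog_correct:
  assumes at: "code_at P pc (divmod_prog g R pc)" and g: "2 \<le> g" and m1: "mem 1 = 2^R * n + y" and y: "y < 2^R"
  shows "\<exists>mem'. reaches P (pc, mem) (4 + (n * 6 + 3)) (pc + 10, mem') \<and> mem' 1 = y \<and> mem' (g+2) = n \<and>
     mem' g = 0 \<and> mem' (g+1) = 1 \<and> (\<forall>a. a \<noteq> 1 \<longrightarrow> a < g \<or> g + 5 \<le> a \<longrightarrow> mem' a = mem a)"
proof -
  note s = step_code_at[OF at]
  let ?I = "\<lambda>k m'. m' 1 = 2^R * (n - k) + y \<and> m' (g+2) = k \<and> m' g = 0 \<and> m' (g+1) = 1 \<and> m' (g+3) = 2^R \<and>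
     (\<forall>a. a \<noteq> 1 \<longrightarrow> a < g \<or> g + 5 \<le> a \<longrightarrow> m' a = mem a)"
  let ?Q = "\<lambda>m'. m' 1 = y \<and> m' (g+2) = n \<and>
     m' g = 0 \<and> m' (g+1) = 1 \<and> (\<forall>a. a \<noteq> 1 \<longrightarrow> a < g \<or> g + 5 \<le> a \<longrightarrow> m' a = mem a)"
  have init: "(step P ^^ 4) (pc, mem) = (pc + 4, mem(g := 0, g+1 := 1, g+2 := 0, g+3 := 2^R))"
    using g by (simp add: s divmod_prog_def funpow_numeral funpow_one)
  have I0: "?I 0 (mem(g := 0, g+1 := 1, g+2 := 0, g+3 := 2^R))"
    using g m1 by simp
  have L: "\<exists>m'. reaches P (pc + 4, mem(g := 0, g+1 := 1, g+2 := 0, g+3 := 2^R)) (n * 6 + 3) (pc + 10, m') \<and> ?Q m'"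
  proof (rule reaches_loop[where I = ?I])
    fix k m' assume k: "k < n" and I: "?I k m'"
    have nz: "2^R * (n - k) + y + 1 - 2^R \<noteq> 0"
    proof -
      have "2^R \<le> 2^R * (n - k)" using k by simp
      thus ?thesis by linarith
    qed
    have eq: "2^R * (n - k) + y - 2^R = 2^R * (n - Suc k) + y"
    proof -
      have "n - k = Suc (n - Suc k)" using k by simp
      thus ?thesis by simp
    qed
    have "(step P ^^ 6) (pc + 4, m') = (pc + 4, m'(g+4 := 2^R * (n - k) + y + 1 - 2^R, 1 := 2^R * (n - k) + y - 2^R, g+2 := Suc k))"
      using I g nz by (simp add: s divmod_prog_def funpow_numeral funpow_one)
    moreover have "?I (Suc k) (m'(g+4 := 2^R * (n - k) + y + 1 - 2^R, 1 := 2^R * (n - k) + y - 2^R, g+2 := Suc k))"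
      using I g eq by auto
    ultimately show "\<exists>m''. reaches P (pc + 4, m') 6 (pc + 4, m'') \<and> ?I (Suc k) m''"
      by (blast intro: reaches_exact)
  next
    fix m' assume I: "?I n m'"
    have z: "y + 1 - 2^R = 0" using y by simp
    have "(step P ^^ 3) (pc + 4, m') = (pc + 10, m'(g+4 := y + 1 - 2^R))"
      using I g z by (simp add: s divmod_prog_def funpow_numeral funpow_one)
    moreover have "?Q (m'(g+4 := y + 1 - 2^R))" using I g by auto
    ultimately show "\<exists>m''. reaches P (pc + 4, m') 3 (pc + 10, m'') \<and> ?Q m''"
      by (blast intro: reaches_exact)
  qed (rule I0)
  then obtain m' where "reaches P (pc + 4, mem(g := 0, g+1 := 1, g+2 := 0, g+3 := 2^R)) (n * 6 + 3) (pc + 10, m')" "?Q m'"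
    by blast
  with reaches_trans[OF reaches_exact[OF init]] show ?thesis by blast
qed

definition multiply_prog :: "nat \<Rightarrow> nat \<Rightarrow> nat \<Rightarrow> instr list" where
  "multiply_prog g R pc = [Const (g+5) 0, Add (g+6) (g+2) g,
    Jz (g+6) (pc+6), Add (g+5) (g+5) 0, Sub (g+6) (g+6) (g+1), Jz g (pc+2),
    Const (g+4) (g+R), Add (g+7) (g+5) (g+4)]"

lemma length_multiply_prog [simp]: "length (multiply_prog g R pc) = 8" by (simp add: multiply_prog_def)

lemma multiply_prog_correct:
  assumes at: "code_at P pc (multiply_prog g R pc)" and g: "2 \<le> g" and r: "mem g = 0" "mem (g+1) = 1" "mem (g+2) = n" "mem 0 = m"
  shows "\<exists>mem'. reaches P (pc, mem) (2 + (n * 4 + 3)) (pc + 8, mem') \<and> mem' (g+5) = n * m \<and> mem' (g+7) = n * m + (g + R) \<and>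
     (\<forall>a. a < g + 4 \<or> g + 8 \<le> a \<longrightarrow> mem' a = mem a)"
proof -
  note s = step_code_at[OF at]
  let ?m0 = "mem(g+5 := 0, g+6 := n)"
  let ?I = "\<lambda>k m'. m' (g+5) = k * m \<and> m' (g+6) = n - k \<and> (\<forall>a. a < g + 4 \<or> g + 8 \<le> a \<longrightarrow> m' a = mem a)"
  let ?Q = "\<lambda>m'. m' (g+5) = n * m \<and> m' (g+7) = n * m + (g + R) \<and> (\<forall>a. a < g + 4 \<or> g + 8 \<le> a \<longrightarrow> m' a = mem a)"
  have init: "(step P ^^ 2) (pc, mem) = (pc + 2, ?m0)"
    using g r by (simp add: s multiply_prog_def funpow_numeral funpow_one)
  have I0: "?I 0 ?m0" using g by simp
  have L: "\<exists>m'. reaches P (pc + 2, ?m0) (n * 4 + 3) (pc + 8, m') \<and> ?Q m'"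
  proof (rule reaches_loop[where I = ?I])
    fix k m' assume k: "k < n" and I: "?I k m'"
    have fr: "m' 0 = m" "m' g = 0" "m' (g+1) = 1" using I g r by auto
    have nz: "n - k \<noteq> 0" using k by simp
    have "(step P ^^ 4) (pc + 2, m') = (pc + 2, m'(g+5 := k * m + m, g+6 := n - k - 1))"
      using I g nz fr by (simp add: s multiply_prog_def funpow_numeral funpow_one)
    moreover have "?I (Suc k) (m'(g+5 := k * m + m, g+6 := n - k - 1))"
      using I g by auto
    ultimately show "\<exists>m''. reaches P (pc + 2, m') 4 (pc + 2, m'') \<and> ?I (Suc k) m''"
      by (blast intro: reaches_exact)
  next
    fix m' assume I: "?I n m'"
    have "(step P ^^ 3) (pc + 2, m') = (pc + 8, m'(g+4 := g + R, g+7 := n * m + (g + R)))"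
      using I g by (simp add: s multiply_prog_def funpow_numeral funpow_one)
    moreover have "?Q (m'(g+4 := g + R, g+7 := n * m + (g + R)))" using I g by auto
    ultimately show "\<exists>m''. reaches P (pc + 2, m') 3 (pc + 8, m'') \<and> ?Q m''"
      by (blast intro: reaches_exact)
  qed (rule I0)
  then obtain m' where "reaches P (pc + 2, ?m0) (n * 4 + 3) (pc + 8, m')" "?Q m'"
    by blast
  with reaches_trans[OF reaches_exact[OF init]] show ?thesis by blast
qed

definition copy_prog :: "nat \<Rightarrow> nat \<Rightarrow> instr list" where
  "copy_prog g pc = [Const (g+8) g, Add (g+9) (g+7) g, Add (g+6) (g+5) g,
    Jz (g+6) (pc+10), Load (g+4) (g+8), Store (g+9) (g+4), Add (g+8) (g+8) (g+1), Add (g+9) (g+9) (g+1),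
    Sub (g+6) (g+6) (g+1), Jz g (pc+3)]"

lemma length_copy_prog [simp]: "length (copy_prog g pc) = 10" by (simp add: copy_prog_def)

lemma copy_prog_correct:
  assumes at: "code_at P pc (copy_prog g pc)" and g: "2 \<le> g" and R: "10 \<le> R"
    and r: "mem g = 0" "mem (g+1) = 1" "mem (g+5) = S" "mem (g+7) = B" and B: "B = S + (g + R)"
  shows "\<exists>mem'. reaches P (pc, mem) (3 + (S * 7 + 1)) (pc + 10, mem') \<and>
     (\<forall>i. R \<le> i \<and> i < S \<longrightarrow> mem' (B + i) = mem (g + i)) \<and>
     (\<forall>a. a \<notin> {g+4, g+6, g+8, g+9} \<and> (a < B \<or> B + S \<le> a) \<longrightarrow> mem' a = mem a)"
proof -
  note s = step_code_at[OF at]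
  let ?m0 = "mem(g+8 := g, g+9 := B, g+6 := S)"
  let ?I = "\<lambda>k m'. m' (g+8) = g + k \<and> m' (g+9) = B + k \<and> m' (g+6) = S - k \<and>
     (\<forall>i. R \<le> i \<and> i < k \<longrightarrow> m' (B + i) = mem (g + i)) \<and>
     (\<forall>a. a \<notin> {g+4, g+6, g+8, g+9} \<and> (a < B \<or> B + k \<le> a) \<longrightarrow> m' a = mem a)"
  let ?Q = "\<lambda>m'. (\<forall>i. R \<le> i \<and> i < S \<longrightarrow> m' (B + i) = mem (g + i)) \<and>
     (\<forall>a. a \<notin> {g+4, g+6, g+8, g+9} \<and> (a < B \<or> B + S \<le> a) \<longrightarrow> m' a = mem a)"
  have init: "(step P ^^ 3) (pc, mem) = (pc + 3, ?m0)"
    using g r by (simp add: s copy_prog_def funpow_numeral funpow_one)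
  have I0: "?I 0 ?m0" using g by simp
  have L: "\<exists>m'. reaches P (pc + 3, ?m0) (S * 7 + 1) (pc + 10, m') \<and> ?Q m'"
  proof (rule reaches_loop[where I = ?I])
    fix k m' assume k: "k < S" and I: "?I k m'"
    have fr0: "\<And>a. a \<notin> {g+4, g+6, g+8, g+9} \<Longrightarrow> a < B \<Longrightarrow> m' a = mem a" using I by blast
    have fr: "m' g = 0" "m' (g+1) = 1" using fr0[of g] fr0[of "g+1"] g r B R by auto
    have nz: "S - k \<noteq> 0" using k by simp
    have "\<exists>m''. (step P ^^ 7) (pc + 3, m') = (pc + 3, m'') \<and> ?I (Suc k) m''"
      using I g nz fr B R k by (auto simp: s copy_prog_def funpow_numeral funpow_one less_Suc_eq)
    thus "\<exists>m''. reaches P (pc + 3, m') 7 (pc + 3, m'') \<and> ?I (Suc k) m''"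
      by (blast intro: reaches_exact)
  next
    fix m' assume I: "?I S m'"
    have "(step P ^^ 1) (pc + 3, m') = (pc + 10, m')"
      using I g by (simp add: s copy_prog_def funpow_one)
    thus "\<exists>m''. reaches P (pc + 3, m') 1 (pc + 10, m'') \<and> ?Q m''" using I
      by (blast intro: reaches_exact)
  qed (rule I0)
  then obtain m' where "reaches P (pc + 3, ?m0) (S * 7 + 1) (pc + 10, m')" "?Q m'"
    by blast
  then show ?thesis using reaches_trans[OF reaches_exact[OF init]] by blast
qed

definition unpack_bit_prog :: "nat \<Rightarrow> nat \<Rightarrow> nat \<Rightarrow> nat \<Rightarrow> instr list" where
  "unpack_bit_prog g R pc j = [Const (g+3) (2^(R-1-j)), Add (g+4) 1 (g+1), Sub (g+4) (g+4) (g+3),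
    Const (g+10) j, Add (g+9) (g+7) (g+10), Jz (g+4) (pc+9), Sub 1 1 (g+3), Store (g+9) (g+1),
    Jz g (pc+10), Store (g+9) g]"

lemma length_unpack_bit_prog [simp]: "length (unpack_bit_prog g R pc j) = 10" by (simp add: unpack_bit_prog_def)

lemma unpack_bit_prog_correct:
  assumes at: "code_at P pc (unpack_bit_prog g R pc j)" and g: "2 \<le> g" and R: "11 \<le> R"
    and r: "mem g = 0" "mem (g+1) = 1" "mem (g+7) = B" "mem 1 = suffix_value b R j" and B: "g + R \<le> B"
    and b: "\<And>i. b i \<le> 1" and j: "j < R"
  shows "\<exists>mem'. reaches P (pc, mem) 9 (pc + 10, mem') \<and> mem' 1 = suffix_value b R (Suc j) \<and> mem' (B + j) = b j \<and>
     (\<forall>a. a \<notin> {1, g+3, g+4, g+9, g+10, B + j} \<longrightarrow> mem' a = mem a)"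
proof -
  note s = step_code_at[OF at]
  have sp: "suffix_value b R j = b j * 2^(R-1-j) + suffix_value b R (Suc j)" using suffix_value_split[OF j] .
  have bd: "suffix_value b R (Suc j) < 2^(R-1-j)" using suffix_value_less[of b R "Suc j", OF b] by simp
  show ?thesis
  proof (cases "b j = 0")
    case True
    hence z: "suffix_value b R j + 1 - 2^(R-1-j) = 0" using sp bd by simp
    have "\<exists>m'. (step P ^^ 7) (pc, mem) = (pc + 10, m') \<and> m' 1 = suffix_value b R (Suc j) \<and> m' (B + j) = b j \<and>
     (\<forall>a. a \<notin> {1, g+3, g+4, g+9, g+10, B + j} \<longrightarrow> m' a = mem a)"
      using g r z True sp B R by (auto simp: s unpack_bit_prog_def funpow_numeral funpow_one)
    then obtain m' where "(step P ^^ 7) (pc, mem) = (pc + 10, m')" "m' 1 = suffix_value b R (Suc j)" "m' (B + j) = b j"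
     "\<forall>a. a \<notin> {1, g+3, g+4, g+9, g+10, B + j} \<longrightarrow> m' a = mem a" by blast
    moreover have "reaches P (pc, mem) 9 (pc + 10, m')" using reachesI[OF calculation(1)] by simp
    ultimately show ?thesis by blast
  next
    case False
    hence b1: "b j = 1" using b[of j] by simp
    hence nz: "suffix_value b R j + 1 - 2^(R-1-j) \<noteq> 0" using sp by simp
    have sb: "suffix_value b R j - 2^(R-1-j) = suffix_value b R (Suc j)" using sp b1 by simp
    have "\<exists>m'. (step P ^^ 9) (pc, mem) = (pc + 10, m') \<and> m' 1 = suffix_value b R (Suc j) \<and> m' (B + j) = b j \<and>
     (\<forall>a. a \<notin> {1, g+3, g+4, g+9, g+10, B + j} \<longrightarrow> m' a = mem a)"
      using g r nz b1 sb B R by (auto simp: s unpack_bit_prog_def funpow_numeral funpow_one)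
    thus ?thesis by (blast intro: reachesI)
  qed
qed

primrec unpack_prog :: "nat \<Rightarrow> nat \<Rightarrow> nat \<Rightarrow> nat \<Rightarrow> instr list" where
  "unpack_prog g R pc 0 = []"
| "unpack_prog g R pc (Suc J) = unpack_prog g R pc J @ unpack_bit_prog g R (pc + 10 * J) J"

lemma length_unpack_prog [simp]: "length (unpack_prog g R pc J) = 10 * J"
  by (induction J) auto

lemma unpack_prog_correct:
  assumes at: "code_at P pc (unpack_prog g R pc J)" and g: "2 \<le> g" and R: "11 \<le> R"
    and r: "mem g = 0" "mem (g+1) = 1" "mem (g+7) = B" "mem 1 = suffix_value b R 0" and B: "g + R \<le> B"
    and b: "\<And>i. b i \<le> 1" and J: "J \<le> R"
  shows "\<exists>mem'. reaches P (pc, mem) (9 * J) (pc + 10 * J, mem') \<and> mem' 1 = suffix_value b R J \<and> (\<forall>i<J. mem' (B + i) = b i) \<and>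
     (\<forall>a. a \<notin> {1, g+3, g+4, g+9, g+10} \<and> \<not> (B \<le> a \<and> a < B + J) \<longrightarrow> mem' a = mem a)"
  using at J
proof (induction J)
  case 0
  then show ?case using r by (auto intro: reaches_refl)
next
  case (Suc J)
  have a1: "code_at P pc (unpack_prog g R pc J)" and a2: "code_at P (pc + 10 * J) (unpack_bit_prog g R (pc + 10 * J) J)"
    using Suc.prems(1) by (simp_all add: code_at_append)
  obtain m1 where m1: "reaches P (pc, mem) (9 * J) (pc + 10 * J, m1)" "m1 1 = suffix_value b R J" "\<forall>i<J. m1 (B + i) = b i"
     "\<forall>a. a \<notin> {1, g+3, g+4, g+9, g+10} \<and> \<not> (B \<le> a \<and> a < B + J) \<longrightarrow> m1 a = mem a"
    using Suc.IH[OF a1] Suc.prems(2) by auto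
  have rr: "m1 g = 0" "m1 (g+1) = 1" "m1 (g+7) = B" using m1(4) r B R g by auto
  obtain m2 where m2: "reaches P (pc + 10 * J, m1) 9 (pc + 10 * J + 10, m2)" "m2 1 = suffix_value b R (Suc J)" "m2 (B + J) = b J"
     "\<forall>a. a \<notin> {1, g+3, g+4, g+9, g+10, B + J} \<longrightarrow> m2 a = m1 a"
    using unpack_bit_prog_correct[OF a2 g R rr m1(2) B b] Suc.prems(2) by auto
  have "reaches P (pc, mem) (9 * Suc J) (pc + 10 * Suc J, m2)"
    using reaches_trans[OF m1(1) m2(1)] by (simp add: add_ac)
  moreover have "\<forall>i<Suc J. m2 (B + i) = b i" using m1(3) m2(3,4) B R g by (auto simp: less_Suc_eq)
  moreover have "\<forall>a. a \<notin> {1, g+3, g+4, g+9, g+10} \<and> \<not> (B \<le> a \<and> a < B + Suc J) \<longrightarrow> m2 a = mem a"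
    using m1(4) m2(4) by auto
  ultimately show ?case using m2(2) by blast
qed

definition column_sums_prog :: "nat \<Rightarrow> nat \<Rightarrow> nat \<Rightarrow> instr list" where
  "column_sums_prog g R pc = [Add (g+4) (g+7) (g+5), Const (g+11) R, Add (g+12) (g+4) (g+11),
    Add (g+13) (g+7) g, Add (g+14) (g+12) g, Add (g+15) 0 g,
    Jz (g+15) (pc+21), Add (g+16) (g+13) g, Const (g+17) 0, Add (g+18) (g+2) g,
    Jz (g+18) (pc+16), Load (g+4) (g+16), Add (g+17) (g+17) (g+4), Add (g+16) (g+16) 0,
    Sub (g+18) (g+18) (g+1), Jz g (pc+10),
    Store (g+14) (g+17), Add (g+13) (g+13) (g+1), Add (g+14) (g+14) (g+1), Sub (g+15) (g+15) (g+1),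
    Jz g (pc+6)]"

lemma length_column_sums_prog [simp]: "length (column_sums_prog g R pc) = 21" by (simp add: column_sums_prog_def)

definition column_sum :: "(nat \<Rightarrow> nat) \<Rightarrow> nat \<Rightarrow> nat \<Rightarrow> nat \<Rightarrow> nat \<Rightarrow> nat \<Rightarrow> nat" where
  "column_sum mem B m n i c = (\<Sum>i'<i. mem (B + i' * m + c))"

lemma add_mult_less_mult: "c < m \<Longrightarrow> i < n \<Longrightarrow> c + i * m < n * (m::nat)"
proof -
  assume "c < m" "i < n"
  hence "c + i * m < m + i * m" by simp
  also have "\<dots> = Suc i * m" by simp
  also have "\<dots> \<le> n * m" using \<open>i < n\<close> by (intro mult_right_mono) auto
  finally show ?thesis .
qed

lemma column_sums_prog_correct:
  assumes at: "code_at P pc (column_sums_prog g R pc)" and g: "2 \<le> g" and R: "19 \<le> R"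
    and r: "mem g = 0" "mem (g+1) = 1" "mem (g+2) = n" "mem 0 = m" "mem (g+5) = n * m" "mem (g+7) = B"
    and B: "g + R \<le> B" and Cb: "Cb = B + n * m + R"
  shows "\<exists>mem'. reaches P (pc, mem) (6 + (m * (6 * n + 10) + 1)) (pc + 21, mem') \<and> mem' (g+12) = Cb \<and>
     (\<forall>c<m. mem' (Cb + c) = column_sum mem B m n n c) \<and>
     (\<forall>a. (a < g + 4 \<or> (g + 19 \<le> a \<and> a < Cb) \<or> Cb + m \<le> a \<or> a \<in> {g+5, g+6, g+7, g+8, g+9, g+10}) \<longrightarrow> mem' a = mem a)"
proof -
  note s = step_code_at[OF at]
  define fr where "fr = (\<lambda>a. a < g + 4 \<or> (g + 19 \<le> a \<and> a < Cb) \<or> a \<in> {g+5, g+6, g+7, g+8, g+9, g+10})"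
  have frg: "fr g" "fr (g+1)" "fr (g+2)" "fr 0" "fr (g+5)" "fr (g+7)" using g by (auto simp: fr_def)
  have frM: "fr (B + i * m + c)" if "c < m" "i < n" for i c
    using add_mult_less_mult[OF that] B R Cb unfolding fr_def by auto
  let ?m0 = "mem(g+4 := B + n * m, g+11 := R, g+12 := Cb, g+13 := B, g+14 := Cb, g+15 := m)"
  let ?I = "\<lambda>c m'. m' (g+12) = Cb \<and> m' (g+13) = B + c \<and> m' (g+14) = Cb + c \<and> m' (g+15) = m - c \<and>
     (\<forall>c'<c. m' (Cb + c') = column_sum mem B m n n c') \<and>
     (\<forall>a. (fr a \<or> Cb + c \<le> a) \<longrightarrow> m' a = mem a)"
  let ?Q = "\<lambda>m'. m' (g+12) = Cb \<and> (\<forall>c<m. m' (Cb + c) = column_sum mem B m n n c) \<and>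
     (\<forall>a. (fr a \<or> Cb + m \<le> a) \<longrightarrow> m' a = mem a)"
  have init: "(step P ^^ 6) (pc, mem) = (pc + 6, ?m0)"
    using g r Cb by (simp add: s column_sums_prog_def funpow_numeral funpow_one)
  have I0: "?I 0 ?m0" using g Cb B R by (simp add: fr_def)
  have L: "\<exists>m'. reaches P (pc + 6, ?m0) (m * (6 * n + 10) + 1) (pc + 21, m') \<and> ?Q m'"
  proof (rule reaches_loop[where I = ?I])
    fix c mo assume c: "c < m" and I: "?I c mo"
    have fro: "\<And>a. fr a \<Longrightarrow> mo a = mem a" using I by blast
    have rr: "mo g = 0" "mo (g+1) = 1" "mo (g+2) = n" "mo 0 = m" using fro frg r by auto
    have nz: "m - c \<noteq> 0" using c by simp
    let ?m1 = "mo(g+16 := B + c, g+17 := 0, g+18 := n)"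
    have st1: "(step P ^^ 4) (pc + 6, mo) = (pc + 10, ?m1)"
      using I g nz rr by (simp add: s column_sums_prog_def funpow_numeral funpow_one)
    let ?J = "\<lambda>i m'. m' (g+16) = B + c + i * m \<and> m' (g+17) = column_sum mem B m n i c \<and> m' (g+18) = n - i \<and>
        (\<forall>a. a \<notin> {g+4, g+16, g+17, g+18} \<longrightarrow> m' a = mo a)"
    have J0: "?J 0 ?m1" by (simp add: column_sum_def)
    have L2: "\<exists>m'. reaches P (pc + 10, ?m1) (n * 6 + 6) (pc + 6, m') \<and> ?I (Suc c) m'"
    proof (rule reaches_loop[where I = ?J])
      fix i mi assume i: "i < n" and J: "?J i mi"
      have fri: "\<And>a. a \<notin> {g+4, g+16, g+17, g+18} \<Longrightarrow> mi a = mo a" using J by blast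
      have ri: "mi g = 0" "mi (g+1) = 1" "mi 0 = m" using fri rr g by auto
      have ld: "mi (B + c + i * m) = mem (B + i * m + c)"
        using fri[of "B + c + i * m"] fro[OF frM[OF c i]] B R by (simp add: add_ac)
      have nz2: "n - i \<noteq> 0" using i by simp
      have cs: "column_sum mem B m n (Suc i) c = column_sum mem B m n i c + mem (B + i * m + c)"
        by (simp add: column_sum_def)
      have "\<exists>m''. (step P ^^ 6) (pc + 10, mi) = (pc + 10, m'') \<and> ?J (Suc i) m''"
        using J g nz2 ri ld cs by (simp add: s column_sums_prog_def funpow_numeral funpow_one)
      thus "\<exists>m''. reaches P (pc + 10, mi) 6 (pc + 10, m'') \<and> ?J (Suc i) m''"
        by (blast intro: reaches_exact)
    next
      fix mi assume J: "?J n mi"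
      have fri: "\<And>a. a \<notin> {g+4, g+16, g+17, g+18} \<Longrightarrow> mi a = mo a" using J by blast
      have ri: "mi g = 0" "mi (g+1) = 1" "mi (g+13) = B + c" "mi (g+14) = Cb + c" "mi (g+15) = m - c" "mi (g+12) = Cb"
        using fri rr g I by auto
      have cb: "g \<noteq> Cb + c" "g + 1 \<noteq> Cb + c" "g+13 \<noteq> Cb + c" "g+14 \<noteq> Cb + c" "g+15 \<noteq> Cb + c"
         "Cb + c \<noteq> g" "Cb + c \<noteq> g+1" "Cb + c \<noteq> g+13" "Cb + c \<noteq> g+14" "Cb + c \<noteq> g+15" using Cb B R by auto
      have z: "mi (g+18) = 0" "mi (g+17) = column_sum mem B m n n c" using J by simp_all
      have ex: "(step P ^^ 6) (pc + 10, mi) = (pc + 6, mi(Cb + c := column_sum mem B m n n c, g+13 := B + c + 1, g+14 := Cb + c + 1, g+15 := m - c - 1))"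
        using g ri z cb by (simp add: s column_sums_prog_def funpow_numeral funpow_one)
      have bigC: "g + 19 \<le> Cb" using Cb B R by simp
      have "?I (Suc c) (mi(Cb + c := column_sum mem B m n n c, g+13 := B + c + 1, g+14 := Cb + c + 1, g+15 := m - c - 1))"
      proof (intro conjI allI impI)
        fix c' assume c': "c' < Suc c"
        show "(mi(Cb + c := column_sum mem B m n n c, g+13 := B + c + 1, g+14 := Cb + c + 1, g+15 := m - c - 1)) (Cb + c') = column_sum mem B m n n c'"
        proof (cases "c' = c")
          case True thus ?thesis using cb by simp
        next
          case False
          hence "c' < c" using c' by simp
          moreover have "mi (Cb + c') = mo (Cb + c')" using fri[of "Cb + c'"] bigC by auto
          ultimately show ?thesis using I bigC False by auto
        qed
      next
        fix a assume a: "fr a \<or> Cb + Suc c \<le> a"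
        have a1: "a \<noteq> Cb + c" "a \<noteq> g+13" "a \<noteq> g+14" "a \<noteq> g+15"
          using a bigC unfolding fr_def by auto
        have "mi a = mo a" using fri[of a] a bigC unfolding fr_def by auto
        moreover have "mo a = mem a" using I a by auto
        ultimately show "(mi(Cb + c := column_sum mem B m n n c, g+13 := B + c + 1, g+14 := Cb + c + 1, g+15 := m - c - 1)) a = mem a"
          using a1 by simp
      qed (use ri bigC in simp_all)
      hence "\<exists>m''. (step P ^^ 6) (pc + 10, mi) = (pc + 6, m'') \<and> ?I (Suc c) m''" using ex by blast
      thus "\<exists>m''. reaches P (pc + 10, mi) 6 (pc + 6, m'') \<and> ?I (Suc c) m''"
        by (blast intro: reaches_exact)
    qed (rule J0)
    then obtain m2 where m2: "reaches P (pc + 10, ?m1) (n * 6 + 6) (pc + 6, m2)" "?I (Suc c) m2" by blast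
    have "reaches P (pc + 6, mo) (4 + (n * 6 + 6)) (pc + 6, m2)" using reaches_trans[OF reaches_exact[OF st1] m2(1)] .
    moreover have "4 + (n * 6 + 6) = 6 * n + 10" by simp
    ultimately show "\<exists>m''. reaches P (pc + 6, mo) (6 * n + 10) (pc + 6, m'') \<and> ?I (Suc c) m''"
      using m2(2) by auto
  next
    fix m' assume I: "?I m m'"
    have "(step P ^^ 1) (pc + 6, m') = (pc + 21, m')"
      using I g by (simp add: s column_sums_prog_def funpow_one)
    thus "\<exists>m''. reaches P (pc + 6, m') 1 (pc + 21, m'') \<and> ?Q m''" using I
      by (blast intro: reaches_exact)
  qed (rule I0)
  then obtain m' where "reaches P (pc + 6, ?m0) (m * (6 * n + 10) + 1) (pc + 21, m')" "?Q m'"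
    by blast
  moreover have "\<forall>a. (a < g + 4 \<or> (g + 19 \<le> a \<and> a < Cb) \<or> Cb + m \<le> a \<or> a \<in> {g+5, g+6, g+7, g+8, g+9, g+10}) \<longrightarrow> m' a = mem a"
    using calculation(2) unfolding fr_def by blast
  ultimately show ?thesis using reaches_trans[OF reaches_exact[OF init]] by blast
qed

definition relocate_prog :: "nat \<Rightarrow> nat \<Rightarrow> instr list" where
  "relocate_prog g R = pack_prog g R @ divmod_prog g R (2*R) @ multiply_prog g R (2*R+10) @
     copy_prog g (2*R+18) @ unpack_prog g R (2*R+28) R"

lemma length_relocate_prog: "length (relocate_prog g R) = 12*R + 28"
  by (simp add: relocate_prog_def)

lemma relocate_prog_correct:
  assumes at: "code_at P 0 (relocate_prog g R)" and g: "2 \<le> g" and R: "24 \<le> R"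
    and m0: "mem 0 = m" and m1: "mem 1 = n" and bits: "\<forall>a\<ge>g. mem a \<le> 1"
  defines "B \<equiv> n * m + (g + R)"
  shows "\<exists>mem'. reaches P (0, mem) (11*R + 10*n + 7*(n*m) + 16) (12*R+28, mem') \<and>
     mem' g = 0 \<and> mem' (g+1) = 1 \<and> mem' (g+2) = n \<and> mem' 0 = m \<and> mem' (g+5) = n * m \<and> mem' (g+7) = B \<and>
     (\<forall>a. 2 \<le> a \<and> a < g \<longrightarrow> mem' a = mem a) \<and> (\<forall>i < n * m. mem' (B + i) = mem (g + i))"
proof -
  have atA: "code_at P 0 (pack_prog g R)" and atB: "code_at P (2*R) (divmod_prog g R (2*R))"
    and atC: "code_at P (2*R+10) (multiply_prog g R (2*R+10))" and atD: "code_at P (2*R+18) (copy_prog g (2*R+18))"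
    and atE: "code_at P (2*R+28) (unpack_prog g R (2*R+28) R)"
    using at by (simp_all add: relocate_prog_def code_at_append add.commute)
  define b where "b = (\<lambda>i. mem (g + i))"
  have b1: "\<And>i. b i \<le> 1" using bits by (simp add: b_def)
  define y where "y = horner b R"
  have y: "y < 2^R" "y = suffix_value b R 0"
    using suffix_value_less[of b R 0, OF b1] by (simp_all add: y_def horner_eq_suffix_value)
  define memA where "memA = mem(1 := 2^R * mem 1 + y)"
  have rA: "reaches P (0, mem) (2*R) (2*R, memA)"
    using pack_prog_correct[OF atA g, of mem] by (simp add: memA_def y_def b_def)
  obtain memB where rB: "reaches P (2*R, memA) (4 + (n * 6 + 3)) (2*R + 10, memB)" and
    B: "memB 1 = y" "memB (g+2) = n" "memB g = 0" "memB (g+1) = 1"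
       "\<forall>a. a \<noteq> 1 \<longrightarrow> a < g \<or> g + 5 \<le> a \<longrightarrow> memB a = memA a"
    using divmod_prog_correct[OF atB g, of memA n y] y m1 by (auto simp: memA_def)
  have B0: "memB 0 = m" using B(5) g m0 by (simp add: memA_def)
  obtain memC where rC: "reaches P (2*R+10, memB) (2 + (n * 4 + 3)) (2*R+10 + 8, memC)" and
    C: "memC (g+5) = n * m" "memC (g+7) = B" "\<forall>a. a < g + 4 \<or> g + 8 \<le> a \<longrightarrow> memC a = memB a"
    using multiply_prog_correct[OF atC g B(3) B(4) B(2) B0] unfolding B_def by blast
  have Cr: "memC g = 0" "memC (g+1) = 1" "memC 1 = y" "memC (g+2) = n" "memC 0 = m"
    using C B B0 g by auto
  obtain memD where rD: "reaches P (2*R+18, memC) (3 + (n * m * 7 + 1)) (2*R+18 + 10, memD)" and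
    D: "\<forall>i. R \<le> i \<and> i < n * m \<longrightarrow> memD (B + i) = memC (g + i)"
       "\<forall>a. a \<notin> {g+4, g+6, g+8, g+9} \<and> (a < B \<or> B + n * m \<le> a) \<longrightarrow> memD a = memC a"
    using copy_prog_correct[OF atD g _ Cr(1) Cr(2) C(1) C(2)] R unfolding B_def by auto
  have Dr: "memD g = 0" "memD (g+1) = 1" "memD (g+7) = B" "memD 1 = suffix_value b R 0"
    using D(2) Cr C y R by (auto simp: B_def)
  obtain memE where rE: "reaches P (2*R+28, memD) (9 * R) (2*R+28 + 10 * R, memE)" and
    E: "\<forall>i<R. memE (B + i) = b i"
       "\<forall>a. a \<notin> {1, g+3, g+4, g+9, g+10} \<and> \<not> (B \<le> a \<and> a < B + R) \<longrightarrow> memE a = memD a"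
    using unpack_prog_correct[OF atE g _ Dr(1) Dr(2) Dr(3) Dr(4) _ b1 le_refl] R by (auto simp: B_def)
  have Efr: "\<And>a. a \<notin> {1, g+3, g+4, g+9, g+10} \<Longrightarrow> a < B \<Longrightarrow> memE a = memD a" using E(2) by auto
  have BBg: "g + R \<le> B" by (simp add: B_def)
  have Er: "memE g = 0" "memE (g+1) = 1" "memE (g+2) = n" "memE 0 = m" "memE (g+5) = n * m" "memE (g+7) = B"
    using Efr[of g] Efr[of "g+1"] Efr[of "g+2"] Efr[of 0] Efr[of "g+5"] Efr[of "g+7"] D(2) Cr C R BBg g
    by (auto simp: B_def)
  have "memE (B + i) = mem (g + i)" if i: "i < n * m" for i
  proof (cases "i < R")
    case True thus ?thesis using E(1) by (simp add: b_def)
  next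
    case False
    hence "memE (B + i) = memD (B + i)" using E(2) R BBg by auto
    also have "\<dots> = memC (g + i)" using D(1) False i by auto
    also have "\<dots> = memB (g + i)" using C(3) False R by auto
    also have "\<dots> = memA (g + i)" using B(5) False R g by auto
    also have "\<dots> = mem (g + i)" using g by (simp add: memA_def)
    finally show ?thesis .
  qed
  moreover have "memE a = mem a" if a: "2 \<le> a" "a < g" for a
  proof -
    have "memE a = memD a" using E(2) a R by (auto simp: B_def)
    also have "\<dots> = memC a" using D(2) a by (auto simp: B_def)
    also have "\<dots> = memB a" using C(3) a by auto
    also have "\<dots> = memA a" using B(5) a by auto
    finally show ?thesis using a by (simp add: memA_def)
  qed
  moreover have "reaches P (0, mem) (11*R + 10*n + 7*(n*m) + 16) (12*R+28, memE)"
  proof -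
    have "2*R+10 + 8 = 2*R+18" "2*R+18 + 10 = 2*R+28" "2*R+28 + 10 * R = 12*R+28" by simp_all
    then have "reaches P (0, mem) (2*R + (4 + (n*6+3)) + (2 + (n*4+3)) + (3 + (n*m*7+1)) + 9*R) (12*R+28, memE)"
      using reaches_trans[OF reaches_trans[OF reaches_trans[OF reaches_trans[OF rA rB]]]] rC rD rE
      by metis
    then show ?thesis by (simp add: algebra_simps)
  qed
  ultimately show ?thesis using Er by blast
qed

definition count_prog :: "nat \<Rightarrow> nat \<Rightarrow> instr list" where
  "count_prog g R = relocate_prog g R @ column_sums_prog g R (12*R+28)"

lemma length_count_prog: "length (count_prog g R) = 12*R + 49"
  by (simp add: count_prog_def length_relocate_prog)

definition count_time :: "nat \<Rightarrow> nat \<Rightarrow> nat \<Rightarrow> nat" where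
  "count_time m n R = 11*R + 10*n + 7*(n*m) + 16 + (7 + m * (6*n + 10))"

lemma count_prog_correct:
  assumes at: "code_at P 0 (count_prog g R @ rest)" and g: "2 \<le> g" and R: "24 \<le> R"
    and m0: "mem 0 = m" and m1: "mem 1 = n" and bits: "\<forall>a\<ge>g. mem a \<le> 1"
  defines "Cb \<equiv> 2*(n*m) + g + 2*R"
  shows "\<exists>mem'. reaches P (0, mem) (count_time m n R) (12*R+49, mem') \<and>
     mem' g = 0 \<and> mem' (g+1) = 1 \<and> mem' (g+2) = n \<and> mem' 0 = m \<and> mem' (g+12) = Cb \<and>
     (\<forall>a. 2 \<le> a \<and> a < g \<longrightarrow> mem' a = mem a) \<and> (\<forall>c<m. mem' (Cb + c) = (\<Sum>i<n. mem (g + (i*m + c))))"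
proof -
  have atR: "code_at P 0 (relocate_prog g R)" and atF: "code_at P (12*R+28) (column_sums_prog g R (12*R+28))"
    using at by (simp_all add: count_prog_def code_at_append length_relocate_prog)
  define B where "B = n * m + (g + R)"
  obtain memE where rE: "reaches P (0, mem) (11*R + 10*n + 7*(n*m) + 16) (12*R+28, memE)" and
    E: "memE g = 0" "memE (g+1) = 1" "memE (g+2) = n" "memE 0 = m" "memE (g+5) = n * m" "memE (g+7) = B"
       "\<forall>a. 2 \<le> a \<and> a < g \<longrightarrow> memE a = mem a" "\<forall>i < n * m. memE (B + i) = mem (g + i)"
    using relocate_prog_correct[OF atR g R m0 m1 bits] unfolding B_def by blast
  have Cb: "Cb = B + n * m + R" by (simp add: Cb_def B_def)
  obtain memF where rF: "reaches P (12*R+28, memE) (6 + (m * (6 * n + 10) + 1)) (12*R+28 + 21, memF)" and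
    F: "memF (g+12) = Cb" "\<forall>c<m. memF (Cb + c) = column_sum memE B m n n c"
       "\<forall>a. (a < g + 4 \<or> (g + 19 \<le> a \<and> a < Cb) \<or> Cb + m \<le> a \<or> a \<in> {g+5, g+6, g+7, g+8, g+9, g+10}) \<longrightarrow>
          memF a = memE a"
    using column_sums_prog_correct[OF atF g _ E(1-6) _ Cb] R by (auto simp: B_def)
  have "column_sum memE B m n n c = (\<Sum>i<n. mem (g + (i*m + c)))" if c: "c < m" for c
    unfolding column_sum_def
  proof (rule sum.cong)
    fix i assume "i \<in> {..<n}"
    then have "i * m + c < n * m" using add_mult_less_mult[OF c, of i n] by (simp add: add.commute)
    then show "memE (B + i * m + c) = mem (g + (i * m + c))" using E(8) by (simp add: add.assoc)
  qed simp
  moreover have "memF g = 0" "memF (g+1) = 1" "memF (g+2) = n" "memF 0 = m"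
    using F(3) E(1-4) by auto
  moreover have "\<forall>a. 2 \<le> a \<and> a < g \<longrightarrow> memF a = mem a"
    using F(3) E(7) by auto
  moreover have "reaches P (0, mem) (count_time m n R) (12*R+49, memF)"
    using reaches_trans[OF rE rF] by (simp add: count_time_def add.commute)
  ultimately show ?thesis
    using F(1,2) by auto
qed

section \<open>Selecting candidates and writing the output\<close>

definition threshold_prog :: "nat \<Rightarrow> nat \<Rightarrow> instr list" where
  "threshold_prog g pc = [Add (g+21) (g+12) 0, Add (g+14) (g+12) g, Add (g+17) (g+21) g, Add (g+15) 0 g,
    Jz (g+15) (pc+16), Load (g+4) (g+14), Add (g+4) (g+4) (g+4), Sub (g+4) (g+4) (g+2),
    Jz (g+4) (pc+11), Store (g+17) (g+1), Jz g (pc+12), Store (g+17) g,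
    Add (g+14) (g+14) (g+1), Add (g+17) (g+17) (g+1), Sub (g+15) (g+15) (g+1), Jz g (pc+4),
    Add (g+22) 0 g]"

lemma length_threshold_prog [simp]: "length (threshold_prog g pc) = 17" by (simp add: threshold_prog_def)

lemma threshold_prog_iteration:
  assumes at: "code_at P pc (threshold_prog g pc)" and g: "2 \<le> g"
    and r: "mo g = 0" "mo (g+1) = 1" "mo (g+2) = n" "mo (g+14) = x" "mo (g+17) = a" "mo (g+15) = k" "mo x = v"
    and k: "k \<noteq> 0" and a: "a \<notin> {g, g+1, g+2, g+4, g+14, g+15, g+17}" and x: "x \<noteq> g+4"
  shows "\<exists>X. reaches P (pc + 4, mo) 11 (pc + 4, mo(g + 4 := X, a := (if n < 2 * v then 1 else 0),
    g + 14 := Suc x, g + 17 := Suc a, g + 15 := k - 1))"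
proof -
  have ne: "g \<noteq> a" "g + 1 \<noteq> a" "g+2 \<noteq> a" "g+4 \<noteq> a" "g+14 \<noteq> a" "g+15 \<noteq> a" "g+17 \<noteq> a"
      "a \<noteq> g" "a \<noteq> g+1" "a \<noteq> g+2" "a \<noteq> g+4" "a \<noteq> g+14" "a \<noteq> g+15" "a \<noteq> g+17"
    using a by auto
  note run = step_code_at[OF at] threshold_prog_def funpow_numeral funpow_one
  show ?thesis
  proof (cases "n < 2 * v")
    case True
    then have "reaches P (pc + 4, mo) 11 (pc + 4, mo(g + 4 := v + v - n, a := 1,
        g + 14 := Suc x, g + 17 := Suc a, g + 15 := k - 1))"
      using g r k x ne by (intro reaches_exact) (simp add: run)
    then show ?thesis using True by auto
  next
    case False
    then have "reaches P (pc + 4, mo) 11 (pc + 4, mo(g + 4 := 0, a := 0,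
        g + 14 := Suc x, g + 17 := Suc a, g + 15 := k - 1))"
      using g r k x ne by (intro reachesI[where t=10]) (simp_all add: run)
    then show ?thesis using False by auto
  qed
qed

lemma threshold_prog_correct:
  assumes at: "code_at P pc (threshold_prog g pc)" and g: "2 \<le> g"
    and r: "mem g = 0" "mem (g+1) = 1" "mem (g+2) = n" "mem 0 = m" "mem (g+12) = Cb"
    and Cb: "g + 23 \<le> Cb"
  shows "\<exists>mem'. reaches P (pc, mem) (4 + (m * 11 + 2)) (pc + 17, mem') \<and> mem' (g+21) = Cb + m \<and> mem' (g+22) = m \<and>
     (\<forall>c<m. mem' (Cb + m + c) = (if n < 2 * mem (Cb + c) then 1 else 0)) \<and>
     (\<forall>a. a \<notin> {g+4, g+14, g+15, g+17, g+21, g+22} \<and> a < Cb + m \<longrightarrow> mem' a = mem a)"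
proof -
  define fr where "fr = (\<lambda>a. a \<notin> {g+4, g+14, g+15, g+17, g+21, g+22} \<and> a < Cb + m)"
  let ?m0 = "mem(g+21 := Cb + m, g+14 := Cb, g+17 := Cb + m, g+15 := m)"
  let ?I = "\<lambda>c m'. m' (g+21) = Cb + m \<and> m' (g+14) = Cb + c \<and> m' (g+17) = Cb + m + c \<and> m' (g+15) = m - c \<and>
     (\<forall>c'<c. m' (Cb + m + c') = (if n < 2 * mem (Cb + c') then 1 else 0)) \<and>
     (\<forall>a. (fr a \<or> Cb + m + c \<le> a) \<longrightarrow> m' a = mem a)"
  let ?Q = "\<lambda>m'. m' (g+21) = Cb + m \<and> m' (g+22) = m \<and>
     (\<forall>c<m. m' (Cb + m + c) = (if n < 2 * mem (Cb + c) then 1 else 0)) \<and>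
     (\<forall>a. fr a \<longrightarrow> m' a = mem a)"
  have init: "(step P ^^ 4) (pc, mem) = (pc + 4, ?m0)"
    using g r by (simp add: step_code_at[OF at] threshold_prog_def funpow_numeral funpow_one)
  have I0: "?I 0 ?m0" using g Cb by (auto simp: fr_def)
  have L: "\<exists>m'. reaches P (pc + 4, ?m0) (m * 11 + 2) (pc + 17, m') \<and> ?Q m'"
  proof (rule reaches_loop[where I = ?I])
    fix c mo assume c: "c < m" and I: "?I c mo"
    have fro: "\<And>a. fr a \<Longrightarrow> mo a = mem a" using I by blast
    have rr: "mo g = 0" "mo (g+1) = 1" "mo (g+2) = n"
      using fro[of g] fro[of "g+1"] fro[of "g+2"] r g Cb by (auto simp: fr_def)
    have rc: "mo (g+14) = Cb + c" "mo (g+17) = Cb + m + c" "mo (g+15) = m - c" using I by auto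
    have cnt: "mo (Cb + c) = mem (Cb + c)" using fro[of "Cb + c"] c Cb by (auto simp: fr_def)
    have nz: "m - c \<noteq> 0" using c by simp
    have fresh: "Cb + m + c \<notin> {g, g+1, g+2, g+4, g+14, g+15, g+17}" "Cb + c \<noteq> g+4"
      using Cb by auto
    define v where "v = (if n < 2 * mem (Cb + c) then 1 else (0::nat))"
    obtain xx where ex: "reaches P (pc + 4, mo) 11 (pc + 4, mo(g + 4 := xx, Cb + m + c := v, g + 14 := Suc (Cb + c),
        g + 17 := Suc (Cb + m + c), g + 15 := m - c - 1))"
      using threshold_prog_iteration[OF at g rr rc cnt nz fresh] by (auto simp: v_def)
    let ?m2 = "mo(g + 4 := xx, Cb + m + c := v, g + 14 := Suc (Cb + c), g + 17 := Suc (Cb + m + c), g + 15 := m - c - 1)"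
    have fr2: "\<And>a. a \<notin> {g+4, g+14, g+15, g+17, Cb + m + c} \<Longrightarrow> ?m2 a = mo a" by auto
    have "?I (Suc c) ?m2"
    proof (intro conjI allI impI)
      show "?m2 (g+21) = Cb + m" using I Cb by simp
      show "?m2 (g+14) = Cb + Suc c" "?m2 (g+17) = Cb + m + Suc c" "?m2 (g+15) = m - Suc c" by simp_all
      fix c' assume c': "c' < Suc c"
      show "?m2 (Cb + m + c') = (if n < 2 * mem (Cb + c') then 1 else 0)"
      proof (cases "c' = c")
        case True thus ?thesis using fresh by (auto simp: v_def)
      next
        case False
        hence "c' < c" using c' by simp
        moreover have "?m2 (Cb + m + c') = mo (Cb + m + c')" using False Cb by (intro fr2) auto
        ultimately show ?thesis using I by auto
      qed
    next
      fix a assume a: "fr a \<or> Cb + m + Suc c \<le> a"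
      have "a \<notin> {g+4, g+14, g+15, g+17, Cb + m + c}" using a Cb unfolding fr_def by auto
      hence "?m2 a = mo a" by (rule fr2)
      thus "?m2 a = mem a" using I a by auto
    qed
    thus "\<exists>m''. reaches P (pc + 4, mo) 11 (pc + 4, m'') \<and> ?I (Suc c) m''" using ex by blast
  next
    fix m' assume I: "?I m m'"
    have fr0: "m' 0 = m" "m' g = 0" using I r g Cb by (auto simp: fr_def)
    have "(step P ^^ 2) (pc + 4, m') = (pc + 17, m'(g+22 := m))"
      using g fr0 I by (simp add: step_code_at[OF at] threshold_prog_def funpow_numeral funpow_one)
    moreover have "?Q (m'(g+22 := m))" using I Cb by (auto simp: fr_def)
    ultimately show "\<exists>m''. reaches P (pc + 4, m') 2 (pc + 17, m'') \<and> ?Q m''"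
      by (blast intro: reaches_exact)
  qed (rule I0)
  then obtain m' where "reaches P (pc + 4, ?m0) (m * 11 + 2) (pc + 17, m')" "?Q m'"
    by blast
  moreover have "\<forall>a. a \<notin> {g+4, g+14, g+15, g+17, g+21, g+22} \<and> a < Cb + m \<longrightarrow> m' a = mem a"
    using calculation(2) unfolding fr_def by blast
  ultimately show ?thesis using reaches_trans[OF reaches_exact[OF init]] by blast
qed

definition count_pos_prog :: "nat \<Rightarrow> nat \<Rightarrow> instr list" where
  "count_pos_prog g pc = [Add (g+21) (g+12) 0, Add (g+14) (g+12) g, Add (g+15) 0 g, Const (g+18) 0,
    Jz (g+15) (pc+13), Load (g+4) (g+14), Add (g+4) (g+4) (g+4), Sub (g+4) (g+4) (g+2),
    Jz (g+4) (pc+10), Add (g+18) (g+18) (g+1), Add (g+14) (g+14) (g+1),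
    Sub (g+15) (g+15) (g+1), Jz g (pc+4)]"

lemma length_count_pos_prog [simp]: "length (count_pos_prog g pc) = 13" by (simp add: count_pos_prog_def)

definition select_prog :: "nat \<Rightarrow> nat \<Rightarrow> instr list" where
  "select_prog g pc = [Add (g+14) (g+12) g, Add (g+17) (g+21) (g+1), Add (g+15) 0 g, Sub (g+19) 2 (g+18),
    Jz (g+15) (pc+23), Load (g+4) (g+14), Add (g+20) (g+4) (g+4), Sub (g+4) (g+20) (g+2),
    Jz (g+4) (pc+11), Store (g+17) (g+1), Jz g (pc+19), Add (g+4) (g+20) (g+1),
    Sub (g+4) (g+4) (g+2), Jz (g+4) (pc+18), Jz (g+19) (pc+18), Store (g+17) (g+1),
    Sub (g+19) (g+19) (g+1), Jz g (pc+19), Store (g+17) g, Add (g+14) (g+14) (g+1),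
    Add (g+17) (g+17) (g+1), Sub (g+15) (g+15) (g+1), Jz g (pc+4)]"

lemma length_select_prog [simp]: "length (select_prog g pc) = 23" by (simp add: select_prog_def)

definition flag_prog :: "nat \<Rightarrow> nat \<Rightarrow> instr list" where
  "flag_prog g pc = [Sub (g+4) (g+18) 2, Jz (g+4) (pc+4), Store (g+21) g, Jz g (pc+8), Jz (g+19) (pc+7),
    Store (g+21) g, Jz g (pc+8), Store (g+21) (g+1), Const (g+4) 1, Add (g+22) 0 (g+4)]"

lemma length_flag_prog [simp]: "length (flag_prog g pc) = 10" by (simp add: flag_prog_def)

lemma count_pos_prog_correct:
  assumes at: "code_at P pc (count_pos_prog g pc)" and g: "2 \<le> g"
    and r: "mem g = 0" "mem (g+1) = 1" "mem (g+2) = n" "mem 0 = m" "mem (g+12) = Cb"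
    and Cb: "g + 23 \<le> Cb"
  shows "\<exists>mem'. reaches P (pc, mem) (4 + (m * 9 + 1)) (pc + 13, mem') \<and> mem' (g+21) = Cb + m \<and>
     mem' (g+18) = card {c. c < m \<and> n < 2 * mem (Cb + c)} \<and>
     (\<forall>a. a \<notin> {g+4, g+14, g+15, g+18, g+21} \<longrightarrow> mem' a = mem a)"
proof -
  define fr where "fr = (\<lambda>a. a \<notin> {g+4, g+14, g+15, g+18, g+21})"
  let ?m0 = "mem(g+21 := Cb + m, g+14 := Cb, g+15 := m, g+18 := 0)"
  let ?I = "\<lambda>c m'. m' (g+21) = Cb + m \<and> m' (g+14) = Cb + c \<and> m' (g+15) = m - c \<and>
     m' (g+18) = card {c'. c' < c \<and> n < 2 * mem (Cb + c')} \<and> (\<forall>a. fr a \<longrightarrow> m' a = mem a)"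
  let ?Q = "\<lambda>m'. m' (g+21) = Cb + m \<and>
     m' (g+18) = card {c. c < m \<and> n < 2 * mem (Cb + c)} \<and> (\<forall>a. fr a \<longrightarrow> m' a = mem a)"
  have init: "(step P ^^ 4) (pc, mem) = (pc + 4, ?m0)"
    using g r by (simp add: step_code_at[OF at] count_pos_prog_def funpow_numeral funpow_one)
  have I0: "?I 0 ?m0" using g Cb by (auto simp: fr_def)
  have L: "\<exists>m'. reaches P (pc + 4, ?m0) (m * 9 + 1) (pc + 13, m') \<and> ?Q m'"
  proof (rule reaches_loop[where I = ?I])
    fix c mo assume c: "c < m" and I: "?I c mo"
    have fro: "\<And>a. fr a \<Longrightarrow> mo a = mem a" using I by blast
    have rr: "mo g = 0" "mo (g+1) = 1" "mo (g+2) = n"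
      using fro[of g] fro[of "g+1"] fro[of "g+2"] r g by (auto simp: fr_def)
    have rc: "mo (g+14) = Cb + c" "mo (g+15) = m - c" "mo (g+18) = card {c'. c' < c \<and> n < 2 * mem (Cb + c')}" using I by auto
    have cnt: "mo (Cb + c) = mem (Cb + c)" using fro[of "Cb + c"] c Cb by (auto simp: fr_def)
    have nz: "m - c \<noteq> 0" using c by simp
    have ne: "Cb + c \<noteq> g+4" using Cb by simp
    obtain xx yy where ex: "reaches P (pc + 4, mo) 9 (pc + 4, mo(g + 4 := xx, g + 18 := yy, g + 14 := Suc (Cb + c), g + 15 := m - c - 1))"
      and yy: "yy = card {c'. c' < Suc c \<and> n < 2 * mem (Cb + c')}"
    proof (cases "n < 2 * mem (Cb + c)")
      case True
      hence t: "mo (Cb + c) + mo (Cb + c) - n \<noteq> 0" using cnt by simp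
      have "reaches P (pc + 4, mo) 9 (pc + 4, mo(g + 4 := mo (Cb + c) + mo (Cb + c) - n,
          g + 18 := Suc (card {c'. c' < c \<and> n < 2 * mem (Cb + c')}), g + 14 := Suc (Cb + c), g + 15 := m - c - 1))"
        using g rr rc nz t ne by (intro reaches_exact) (simp add: step_code_at[OF at] count_pos_prog_def funpow_numeral funpow_one)
      then show ?thesis using that True by (simp add: card_less_Suc_filter)
    next
      case False
      hence t: "mo (Cb + c) + mo (Cb + c) - n = 0" using cnt by simp
      have "reaches P (pc + 4, mo) 9 (pc + 4, mo(g + 4 := 0, g + 14 := Suc (Cb + c), g + 15 := m - c - 1))"
        using g rr rc nz t ne by (intro reachesI[where t=8]) (simp_all add: step_code_at[OF at] count_pos_prog_def funpow_numeral funpow_one)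
      moreover have "mo(g + 4 := 0, g + 14 := Suc (Cb + c), g + 15 := m - c - 1) =
         mo(g + 4 := 0, g + 18 := mo (g+18), g + 14 := Suc (Cb + c), g + 15 := m - c - 1)"
        by (simp add: fun_eq_iff)
      ultimately show ?thesis using that False rc(3) by (simp add: card_less_Suc_filter)
    qed
    let ?m2 = "mo(g + 4 := xx, g + 18 := yy, g + 14 := Suc (Cb + c), g + 15 := m - c - 1)"
    have "?I (Suc c) ?m2" using I yy unfolding fr_def by auto
    thus "\<exists>m''. reaches P (pc + 4, mo) 9 (pc + 4, m'') \<and> ?I (Suc c) m''" using ex by blast
  next
    fix m' assume I: "?I m m'"
    have "(step P ^^ 1) (pc + 4, m') = (pc + 13, m')" using I by (simp add: step_code_at[OF at] count_pos_prog_def funpow_numeral funpow_one)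
    thus "\<exists>m''. reaches P (pc + 4, m') 1 (pc + 13, m'') \<and> ?Q m''" using I
      by (blast intro: reaches_exact)
  qed (rule I0)
  then obtain m' where "reaches P (pc + 4, ?m0) (m * 9 + 1) (pc + 13, m')" "?Q m'"
    by blast
  then show ?thesis using reaches_trans[OF reaches_exact[OF init]] unfolding fr_def by blast
qed

definition tie_count :: "(nat \<Rightarrow> nat) \<Rightarrow> nat \<Rightarrow> nat \<Rightarrow> nat" where
  "tie_count cn n c = card {c'. c' < c \<and> 2 * cn c' = n}"

definition select_bit :: "(nat \<Rightarrow> nat) \<Rightarrow> nat \<Rightarrow> nat \<Rightarrow> nat \<Rightarrow> nat" where
  "select_bit cn n j c = (if n < 2 * cn c \<or> (2 * cn c = n \<and> tie_count cn n c < j) then 1 else 0)"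

lemma tie_count_Suc: "tie_count cn n (Suc c) = tie_count cn n c + (if 2 * cn c = n then 1 else 0)"
  by (simp add: tie_count_def card_less_Suc_filter)

lemma select_prog_iteration:
  assumes at: "code_at P pc (select_prog g pc)" and g: "2 \<le> g"
    and r: "mo g = 0" "mo (g+1) = 1" "mo (g+2) = n"
       "mo (g+14) = x" "mo (g+17) = a" "mo (g+15) = k" "mo x = v" "mo (g+19) = b" and k: "k \<noteq> 0"
    and a: "a \<notin> {g, g+1, g+2, g+4, g+14, g+15, g+17, g+19, g+20}" and x: "x \<notin> {g+4, g+20}"
  shows "\<exists>X. reaches P (pc + 4, mo) 16 (pc + 4, mo(g + 20 := v + v, g + 4 := X,
    a := (if n < 2 * v \<or> 2 * v = n \<and> b \<noteq> 0 then 1 else 0), g + 19 := (if 2 * v = n then b - 1 else b),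
    g + 14 := Suc x, g + 17 := Suc a, g + 15 := k - 1))"
proof -
  have ne: "g \<noteq> a" "g + 1 \<noteq> a" "g+2 \<noteq> a" "g+4 \<noteq> a" "g+14 \<noteq> a" "g+15 \<noteq> a" "g+17 \<noteq> a" "g+19 \<noteq> a"
      "g+20 \<noteq> a" "a \<noteq> g" "a \<noteq> g+1" "a \<noteq> g+2" "a \<noteq> g+4" "a \<noteq> g+14" "a \<noteq> g+15" "a \<noteq> g+17"
      "a \<noteq> g+19" "a \<noteq> g+20" "x \<noteq> g+4" "x \<noteq> g+20"
    using a x by auto
  note run = step_code_at[OF at] select_prog_def funpow_numeral funpow_one
  consider (pos) "n < 2 * v" | (tie_take) "2 * v = n" "b \<noteq> 0" | (tie_skip) "2 * v = n" "b = 0"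
    | (neg) "2 * v < n" by linarith
  then show ?thesis
  proof cases
    case pos
    then have "reaches P (pc + 4, mo) 16 (pc + 4, mo(g + 20 := v + v, g + 4 := v + v - n, a := 1,
        g + 14 := Suc x, g + 17 := Suc a, g + 15 := k - 1))"
      using g r k ne by (intro reachesI[where t=11]) (simp_all add: run)
    moreover have "mo(g + 20 := v + v, g + 4 := v + v - n, a := 1, g + 14 := Suc x, g + 17 := Suc a,
        g + 15 := k - 1) = mo(g + 20 := v + v, g + 4 := v + v - n, a := 1, g + 19 := b,
        g + 14 := Suc x, g + 17 := Suc a, g + 15 := k - 1)"
      using r ne by (auto simp: fun_eq_iff)
    ultimately show ?thesis using pos by auto
  next
    case tie_take
    then have "reaches P (pc + 4, mo) 16 (pc + 4, mo(g + 20 := v + v, g + 4 := Suc (v + v) - n, a := 1,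
        g + 19 := b - 1, g + 14 := Suc x, g + 17 := Suc a, g + 15 := k - 1))"
      using g r k ne by (intro reachesI[where t=16]) (simp_all add: run)
    then show ?thesis using tie_take by auto
  next
    case tie_skip
    then have "reaches P (pc + 4, mo) 16 (pc + 4, mo(g + 20 := v + v, g + 4 := Suc (v + v) - n, a := 0,
        g + 14 := Suc x, g + 17 := Suc a, g + 15 := k - 1))"
      using g r k ne by (intro reachesI[where t=14]) (simp_all add: run)
    moreover have "mo(g + 20 := v + v, g + 4 := Suc (v + v) - n, a := 0, g + 14 := Suc x, g + 17 := Suc a,
        g + 15 := k - 1) = mo(g + 20 := v + v, g + 4 := Suc (v + v) - n, a := 0, g + 19 := b - 1,
        g + 14 := Suc x, g + 17 := Suc a, g + 15 := k - 1)"
      using r ne tie_skip by (auto simp: fun_eq_iff)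
    ultimately show ?thesis using tie_skip by auto
  next
    case neg
    then have "reaches P (pc + 4, mo) 16 (pc + 4, mo(g + 20 := v + v, g + 4 := 0, a := 0,
        g + 14 := Suc x, g + 17 := Suc a, g + 15 := k - 1))"
      using g r k ne by (intro reachesI[where t=13]) (simp_all add: run)
    moreover have "mo(g + 20 := v + v, g + 4 := 0, a := 0, g + 14 := Suc x, g + 17 := Suc a,
        g + 15 := k - 1) = mo(g + 20 := v + v, g + 4 := 0, a := 0, g + 19 := b,
        g + 14 := Suc x, g + 17 := Suc a, g + 15 := k - 1)"
      using r ne by (auto simp: fun_eq_iff)
    ultimately show ?thesis using neg by auto
  qed
qed

lemma select_prog_correct:
  assumes at: "code_at P pc (select_prog g pc)" and g: "3 \<le> g"
    and r: "mem g = 0" "mem (g+1) = 1" "mem (g+2) = n" "mem 0 = m" "mem (g+12) = Cb" "mem (g+21) = Cb + m"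
       "mem 2 = kk" "mem (g+18) = s"
    and Cb: "g + 23 \<le> Cb"
  shows "\<exists>mem'. reaches P (pc, mem) (4 + (m * 16 + 1)) (pc + 23, mem') \<and>
     mem' (g+19) = (kk - s) - tie_count (\<lambda>c. mem (Cb + c)) n m \<and>
     (\<forall>c<m. mem' (Cb + m + 1 + c) = select_bit (\<lambda>c. mem (Cb + c)) n (kk - s) c) \<and>
     (\<forall>a. a \<notin> {g+4, g+14, g+15, g+17, g+19, g+20} \<and> (a < Cb + m + 1 \<or> Cb + m + 1 + m \<le> a) \<longrightarrow> mem' a = mem a)"
proof -
  have g2: "2 \<le> g" using g by simp
  define cn where "cn = (\<lambda>c. mem (Cb + c))"
  define fr where "fr = (\<lambda>a. a \<notin> {g+4, g+14, g+15, g+17, g+19, g+20} \<and> a < Cb + m + 1)"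
  let ?m0 = "mem(g+14 := Cb, g+17 := Suc (Cb + m), g+15 := m, g+19 := kk - s)"
  let ?I = "\<lambda>c m'. m' (g+14) = Cb + c \<and> m' (g+17) = Cb + m + 1 + c \<and> m' (g+15) = m - c \<and>
     m' (g+19) = (kk - s) - tie_count cn n c \<and>
     (\<forall>c'<c. m' (Cb + m + 1 + c') = select_bit cn n (kk - s) c') \<and>
     (\<forall>a. (fr a \<or> Cb + m + 1 + c \<le> a) \<longrightarrow> m' a = mem a)"
  let ?Q = "\<lambda>m'. m' (g+19) = (kk - s) - tie_count cn n m \<and>
     (\<forall>c<m. m' (Cb + m + 1 + c) = select_bit cn n (kk - s) c) \<and>
     (\<forall>a. (fr a \<or> Cb + m + 1 + m \<le> a) \<longrightarrow> m' a = mem a)"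
  have init: "(step P ^^ 4) (pc, mem) = (pc + 4, ?m0)"
    using g r by (simp add: step_code_at[OF at] select_prog_def funpow_numeral funpow_one)
  have I0: "?I 0 ?m0" using g Cb by (auto simp: fr_def tie_count_def)
  have L: "\<exists>m'. reaches P (pc + 4, ?m0) (m * 16 + 1) (pc + 23, m') \<and> ?Q m'"
  proof (rule reaches_loop[where I = ?I])
    fix c mo assume c: "c < m" and I: "?I c mo"
    have fro: "\<And>a. fr a \<Longrightarrow> mo a = mem a" using I by blast
    have rr: "mo g = 0" "mo (g+1) = 1" "mo (g+2) = n"
      using fro[of g] fro[of "g+1"] fro[of "g+2"] r g Cb by (auto simp: fr_def)
    define a where "a = Cb + m + 1 + c"
    define b where "b = (kk - s) - tie_count cn n c"
    have rc: "mo (g+14) = Cb + c" "mo (g+17) = a" "mo (g+15) = m - c" "mo (Cb + c) = cn c" "mo (g+19) = b"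
      using I fro[of "Cb + c"] c Cb by (auto simp: fr_def cn_def a_def b_def)
    have nz: "m - c \<noteq> 0" using c by simp
    have fresh: "a \<notin> {g, g+1, g+2, g+4, g+14, g+15, g+17, g+19, g+20}" "Cb + c \<notin> {g+4, g+20}"
      using Cb by (auto simp: a_def)
    obtain xx where ex: "reaches P (pc + 4, mo) 16 (pc + 4, mo(g + 20 := cn c + cn c, g + 4 := xx, a := select_bit cn n (kk - s) c,
         g + 19 := (kk - s) - tie_count cn n (Suc c), g + 14 := Suc (Cb + c), g + 17 := Suc a, g + 15 := m - c - 1))"
    proof -
      have "select_bit cn n (kk - s) c = (if n < 2 * cn c \<or> 2 * cn c = n \<and> b \<noteq> 0 then 1 else 0)"
        "(kk - s) - tie_count cn n (Suc c) = (if 2 * cn c = n then b - 1 else b)"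
        by (auto simp: select_bit_def tie_count_Suc b_def)
      then show ?thesis
        using select_prog_iteration[OF at g2 rr rc nz fresh] that by auto
    qed
    let ?m2 = "mo(g + 20 := cn c + cn c, g + 4 := xx, a := select_bit cn n (kk - s) c,
         g + 19 := (kk - s) - tie_count cn n (Suc c), g + 14 := Suc (Cb + c), g + 17 := Suc a, g + 15 := m - c - 1)"
    have fr2: "\<And>a'. a' \<notin> {g+4, g+14, g+15, g+17, g+19, g+20, a} \<Longrightarrow> ?m2 a' = mo a'" by auto
    have "?I (Suc c) ?m2"
    proof (intro conjI allI impI)
      show "?m2 (g+14) = Cb + Suc c" "?m2 (g+17) = Cb + m + 1 + Suc c" "?m2 (g+15) = m - Suc c"
         "?m2 (g+19) = (kk - s) - tie_count cn n (Suc c)" by (simp_all add: a_def)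
      fix c' assume c': "c' < Suc c"
      show "?m2 (Cb + m + 1 + c') = select_bit cn n (kk - s) c'"
      proof (cases "c' = c")
        case True thus ?thesis using fresh by (auto simp: a_def)
      next
        case False
        hence "c' < c" using c' by simp
        moreover have "?m2 (Cb + m + 1 + c') = mo (Cb + m + 1 + c')" using False Cb by (intro fr2) (auto simp: a_def)
        ultimately show ?thesis using I by auto
      qed
    next
      fix a' assume a': "fr a' \<or> Cb + m + 1 + Suc c \<le> a'"
      have "a' \<notin> {g+4, g+14, g+15, g+17, g+19, g+20, a}" using a' Cb unfolding fr_def a_def by auto
      hence "?m2 a' = mo a'" by (rule fr2)
      thus "?m2 a' = mem a'" using I a' by (auto simp: a_def)
    qed
    thus "\<exists>m''. reaches P (pc + 4, mo) 16 (pc + 4, m'') \<and> ?I (Suc c) m''" using ex by blast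
  next
    fix m' assume I: "?I m m'"
    have "(step P ^^ 1) (pc + 4, m') = (pc + 23, m')" using I by (simp add: step_code_at[OF at] select_prog_def funpow_numeral funpow_one)
    thus "\<exists>m''. reaches P (pc + 4, m') 1 (pc + 23, m'') \<and> ?Q m''" using I
      by (blast intro: reaches_exact)
  qed (rule I0)
  then obtain m' where "reaches P (pc + 4, ?m0) (m * 16 + 1) (pc + 23, m')" "?Q m'"
    by blast
  moreover have "\<forall>a. a \<notin> {g+4, g+14, g+15, g+17, g+19, g+20} \<and> (a < Cb + m + 1 \<or> Cb + m + 1 + m \<le> a) \<longrightarrow> m' a = mem a"
    using calculation(2) unfolding fr_def by auto
  moreover have "?m0 = mem(g+14 := Cb, g+17 := Suc (Cb + m), g+15 := m, g+19 := kk - s)" by simp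
  ultimately show ?thesis using reaches_trans[OF reaches_exact[OF init]] unfolding cn_def by blast
qed

lemma flag_prog_correct:
  assumes at: "code_at P pc (flag_prog g pc)" and g: "3 \<le> g" and r: "mem g = 0" "mem (g+1) = 1" "mem 0 = m"
     "mem (g+18) = s" "mem 2 = kk" "mem (g+19) = bu" "mem (g+21) = Ob" and Ob: "g + 23 \<le> Ob"
  shows "reaches P (pc, mem) 7 (pc + 10, mem(Ob := (if s \<le> kk \<and> bu = 0 then 1 else 0), g + 4 := Suc 0, g + 22 := Suc m))"
proof -
  have ne: "Ob \<noteq> g+4" "Ob \<noteq> g+22" "Ob \<noteq> g" "Ob \<noteq> g+1" "Ob \<noteq> 0" using Ob by auto
  show ?thesis
  proof (cases "s \<le> kk")
    case False
    hence t: "s - kk \<noteq> 0" by simp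
    show ?thesis using g r ne t False by (intro reachesI[where t=6]) (simp_all add: step_code_at[OF at] flag_prog_def funpow_numeral funpow_one)
  next
    case True
    hence t: "s - kk = 0" by simp
    show ?thesis
    proof (cases "bu = 0")
      case True
      show ?thesis using g r ne t True \<open>s \<le> kk\<close> by (intro reachesI[where t=6]) (simp_all add: step_code_at[OF at] flag_prog_def funpow_numeral funpow_one)
    next
      case False
      show ?thesis using g r ne t False by (intro reachesI[where t=7]) (simp_all add: step_code_at[OF at] flag_prog_def funpow_numeral funpow_one)
    qed
  qed
qed

text \<open>The output block is copied down to address 0 in two stages: a loop moves the part above the
  work registers, and \<open>shift_down_prog t\<close> moves the first \<open>t+1\<close> cells without any work register.
  For this \<open>output_prog\<close> leaves \<open>Ob + t\<close> in cell \<open>t\<close>, from which each cell \<open>c < t\<close> recomputes its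
  source address \<open>Ob + c\<close>; cell \<open>t\<close> is overwritten last.\<close>

definition output_prog :: "nat \<Rightarrow> nat \<Rightarrow> nat \<Rightarrow> instr list" where
  "output_prog g R pc = [Const (g+4) (g+R), Sub (g+6) (g+22) (g+4), Add (g+8) (g+21) (g+4), Add (g+9) (g+4) g,
    Jz (g+6) (pc+11), Load (g+10) (g+8), Store (g+9) (g+10), Add (g+8) (g+8) (g+1),
    Add (g+9) (g+9) (g+1), Sub (g+6) (g+6) (g+1), Jz g (pc+4), Const (g+4) (g+R-1),
    Add (g+R-1) (g+21) (g+4)]"

lemma length_output_prog [simp]: "length (output_prog g R pc) = 13" by (simp add: output_prog_def)

definition shift_down_prog :: "nat \<Rightarrow> instr list" where
  "shift_down_prog t = concat (map (\<lambda>c. [Const c (t - c), Sub c t c, Load c c]) [0..<t]) @ [Load t t]"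

lemma shift_down_prefix_Suc: "concat (map (\<lambda>c. [Const c (t - c), Sub c t c, Load c c]) [0..<Suc J]) =
   concat (map (\<lambda>c. [Const c (t - c), Sub c t c, Load c c]) [0..<J]) @ [Const J (t - J), Sub J t J, Load J J]"
  by simp

lemma length_shift_down_prog [simp]: "length (shift_down_prog t) = 3 * t + 1"
proof -
  have "length (concat (map (\<lambda>c. [Const c (t - c), Sub c t c, Load c c]) [0..<J])) = 3 * J" for J
    by (induction J) (simp_all only: shift_down_prefix_Suc length_append, simp_all)
  thus ?thesis by (simp add: shift_down_prog_def)
qed

lemma shift_down_prog_straight: "list_all straight (shift_down_prog t)"
  by (simp add: shift_down_prog_def list_all_iff)

lemma fold_shift_down_prefix:
  assumes top: "mem t = Ob + t" and Ob: "t < Ob" and J: "J \<le> t"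
  shows "let m' = fold exec_mem (concat (map (\<lambda>c. [Const c (t - c), Sub c t c, Load c c]) [0..<J])) mem in
     (\<forall>c<J. m' c = mem (Ob + c)) \<and> (\<forall>a. J \<le> a \<longrightarrow> m' a = mem a)"
  using J
proof (induction J)
  case 0 then show ?case by simp
next
  case (Suc J)
  define m1 where "m1 = fold exec_mem (concat (map (\<lambda>c. [Const c (t - c), Sub c t c, Load c c]) [0..<J])) mem"
  have IH: "\<forall>c<J. m1 c = mem (Ob + c)" "\<forall>a. J \<le> a \<longrightarrow> m1 a = mem a" using Suc by (simp_all add: m1_def Let_def)
  have Jt: "J < t" using Suc.prems by simp
  have mt: "m1 t = Ob + t" using IH(2) top Jt by simp
  have mo: "m1 (Ob + J) = mem (Ob + J)" using IH(2) by simp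
  have f: "fold exec_mem (concat (map (\<lambda>c. [Const c (t - c), Sub c t c, Load c c]) [0..<Suc J])) mem =
     m1(J := mem (Ob + J))"
  proof -
    have "fold exec_mem (concat (map (\<lambda>c. [Const c (t - c), Sub c t c, Load c c]) [0..<Suc J])) mem =
      fold exec_mem [Const J (t - J), Sub J t J, Load J J] m1"
      by (simp only: shift_down_prefix_Suc fold_append comp_apply m1_def)
    also have "\<dots> = m1(J := mem (Ob + J))" using mt mo Jt Ob by (simp add: fun_eq_iff)
    finally show ?thesis .
  qed
  show ?case unfolding f Let_def using IH by (auto simp: less_Suc_eq)
qed

lemma fold_shift_down_prog:
  assumes top: "mem t = Ob + t" and Ob: "t < Ob"
  shows "(\<forall>c\<le>t. fold exec_mem (shift_down_prog t) mem c = mem (Ob + c)) \<and> (\<forall>a. t < a \<longrightarrow> fold exec_mem (shift_down_prog t) mem a = mem a)"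
proof -
  define m1 where "m1 = fold exec_mem (concat (map (\<lambda>c. [Const c (t - c), Sub c t c, Load c c]) [0..<t])) mem"
  have P: "\<forall>c<t. m1 c = mem (Ob + c)" "\<forall>a. t \<le> a \<longrightarrow> m1 a = mem a"
    using fold_shift_down_prefix[where mem=mem and t=t and Ob=Ob and J=t, OF top Ob] by (simp_all add: m1_def Let_def)
  have "fold exec_mem (shift_down_prog t) mem = m1(t := m1 (m1 t))" by (simp add: shift_down_prog_def m1_def)
  moreover have "m1 (m1 t) = mem (Ob + t)" using P(2) top by simp
  ultimately show ?thesis using P by (auto simp: le_less)
qed

lemma output_prog_correct:
  assumes at: "code_at P pc (output_prog g R pc)" and g: "2 \<le> g" and R: "24 \<le> R"
    and r: "mem g = 0" "mem (g+1) = 1" "mem (g+22) = L" "mem (g+21) = Ob" and Ob: "L \<le> Ob" "g + R \<le> Ob"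
  shows "\<exists>mem'. reaches P (pc, mem) (4 + ((L - (g + R)) * 7 + 3)) (pc + 13, mem') \<and>
      mem' (g + R - 1) = Ob + (g + R - 1) \<and> (\<forall>j. g + R \<le> j \<and> j < L \<longrightarrow> mem' j = mem (Ob + j)) \<and>
      (\<forall>a. a \<notin> {g+4, g+6, g+8, g+9, g+10, g + R - 1} \<and> \<not> (g + R \<le> a \<and> a < L) \<longrightarrow> mem' a = mem a)"
proof -
  define N where "N = L - (g + R)"
  let ?m0 = "mem(g+4 := g + R, g+6 := L - (g + R), g+8 := Ob + (g + R), g+9 := g + R)"
  define fr where "fr = (\<lambda>k a. a \<notin> {g+4, g+6, g+8, g+9, g+10} \<and> \<not> (g + R \<le> a \<and> a < g + R + k))"
  let ?I = "\<lambda>k m'. m' (g+8) = Ob + (g + R) + k \<and> m' (g+9) = g + R + k \<and> m' (g+6) = N - k \<and>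
     (\<forall>j. g + R \<le> j \<and> j < g + R + k \<longrightarrow> m' j = mem (Ob + j)) \<and> (\<forall>a. fr k a \<longrightarrow> m' a = mem a)"
  let ?Q = "\<lambda>m'. m' (g + R - 1) = Ob + (g + R - 1) \<and>
     (\<forall>j. g + R \<le> j \<and> j < L \<longrightarrow> m' j = mem (Ob + j)) \<and> (\<forall>a. fr N a \<and> a \<noteq> g + R - 1 \<longrightarrow> m' a = mem a)"
  have init: "(step P ^^ 4) (pc, mem) = (pc + 4, ?m0)" using g r by (simp add: step_code_at[OF at] output_prog_def funpow_numeral funpow_one)
  have I0: "?I 0 ?m0" using g by (auto simp: fr_def N_def)
  have L: "\<exists>m'. reaches P (pc + 4, ?m0) (N * 7 + 3) (pc + 13, m') \<and> ?Q m'"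
  proof (rule reaches_loop[where I = ?I])
    fix k mo assume k: "k < N" and I: "?I k mo"
    have fro: "\<And>a. fr k a \<Longrightarrow> mo a = mem a" using I by blast
    have rr: "mo g = 0" "mo (g+1) = 1" using fro[of g] fro[of "g+1"] r R by (auto simp: fr_def)
    define p where "p = Ob + (g + R) + k"
    define q where "q = g + R + k"
    have kL: "g + R + k < L" using k by (simp add: N_def)
    have rc: "mo (g+6) = N - k" "mo (g+8) = p" "mo (g+9) = q" "mo p = mem p"
      using I fro[of p] kL Ob R by (auto simp: fr_def p_def q_def)
    have nz: "N - k \<noteq> 0" using k by simp
    have ne: "q \<noteq> g" "q \<noteq> g+1" "q \<noteq> g+6" "q \<noteq> g+8" "q \<noteq> g+9" "q \<noteq> g+10"
      "g \<noteq> q" "g+1 \<noteq> q" "g+6 \<noteq> q" "g+8 \<noteq> q" "g+9 \<noteq> q" "g+10 \<noteq> q" "p \<noteq> g + 10"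
      using R by (auto simp: p_def q_def)
    have ex: "reaches P (pc + 4, mo) 7 (pc + 4, mo(g+10 := mem p, q := mem p, g+8 := Suc p, g+9 := Suc q, g+6 := N - k - Suc 0))"
      using g rr rc nz ne by (intro reaches_exact) (simp add: step_code_at[OF at] output_prog_def funpow_numeral funpow_one)
    have "?I (Suc k) (mo(g+10 := mem p, q := mem p, g+8 := Suc p, g+9 := Suc q, g+6 := N - k - Suc 0))"
    proof (intro conjI allI impI)
      fix j assume j: "g + R \<le> j \<and> j < g + R + Suc k"
      show "(mo(g+10 := mem p, q := mem p, g+8 := Suc p, g+9 := Suc q, g+6 := N - k - Suc 0)) j = mem (Ob + j)"
      proof (cases "j = q")
        case True thus ?thesis using R by (simp add: p_def q_def add_ac)
      next
        case False thus ?thesis using j I R by (auto simp: q_def)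
      qed
    next
      fix a assume a: "fr (Suc k) a"
      thus "(mo(g+10 := mem p, q := mem p, g+8 := Suc p, g+9 := Suc q, g+6 := N - k - Suc 0)) a = mem a"
        using fro[of a] by (auto simp: fr_def q_def)
    qed (simp_all add: p_def q_def)
    thus "\<exists>m''. reaches P (pc + 4, mo) 7 (pc + 4, m'') \<and> ?I (Suc k) m''" using ex by blast
  next
    fix mo assume I: "?I N mo"
    have r6: "mo (g+6) = 0" and r21: "mo (g+21) = Ob" using I r R by (auto simp: fr_def)
    have "(step P ^^ 3) (pc + 4, mo) = (pc + 13, mo(g+4 := g + R - 1, g + R - 1 := Ob + (g + R - 1)))"
      using g r6 r21 R by (simp add: step_code_at[OF at] output_prog_def funpow_numeral funpow_one)
    moreover have "?Q (mo(g+4 := g + R - 1, g + R - 1 := Ob + (g + R - 1)))"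
      using I R by (auto simp: fr_def N_def)
    ultimately show "\<exists>m''. reaches P (pc + 4, mo) 3 (pc + 13, m'') \<and> ?Q m''"
      by (blast intro: reaches_exact)
  qed (rule I0)
  then obtain m1 where "reaches P (pc + 4, ?m0) (N * 7 + 3) (pc + 13, m1)" "?Q m1" by blast
  moreover have "\<not> (g + R \<le> a \<and> a < L) \<Longrightarrow> \<not> (g + R \<le> a \<and> a < g + R + N)" for a
    by (auto simp: N_def)
  ultimately show ?thesis
    using reaches_trans[OF reaches_exact[OF init]] unfolding N_def fr_def by blast
qed

lemma output_shift_correct:
  assumes at: "code_at P pc (output_prog g R pc @ shift_down_prog (g + R - 1) @ [Halt])"
    and g: "2 \<le> g" and R: "24 \<le> R"
    and r: "mem g = 0" "mem (g+1) = 1" "mem (g+22) = L" "mem (g+21) = Ob" and Ob: "L \<le> Ob" "g + R \<le> Ob"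
  shows "\<exists>mem'. reaches P (pc, mem) (4 + ((L - (g + R)) * 7 + 3) + (3 * (g + R - 1) + 1))
      (pc + 13 + (3 * (g + R - 1) + 1), mem') \<and> (\<forall>j<L. mem' j = mem (Ob + j))"
proof -
  have atO: "code_at P pc (output_prog g R pc)" and atS: "code_at P (pc + 13) (shift_down_prog (g + R - 1))"
    using at by (simp_all add: code_at_append)
  obtain m1 where m1: "reaches P (pc, mem) (4 + ((L - (g + R)) * 7 + 3)) (pc + 13, m1)"
      "m1 (g + R - 1) = Ob + (g + R - 1)" "\<forall>j. g + R \<le> j \<and> j < L \<longrightarrow> m1 j = mem (Ob + j)"
      "\<forall>a. a \<notin> {g+4, g+6, g+8, g+9, g+10, g + R - 1} \<and> \<not> (g + R \<le> a \<and> a < L) \<longrightarrow> m1 a = mem a"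
    using output_prog_correct[OF atO g R r Ob] by blast
  define m2 where "m2 = fold exec_mem (shift_down_prog (g + R - 1)) m1"
  have shift: "\<forall>c\<le>g + R - 1. m2 c = m1 (Ob + c)" "\<forall>a. g + R - 1 < a \<longrightarrow> m2 a = m1 a"
    using fold_shift_down_prog[of m1 "g + R - 1" Ob] m1(2) Ob R by (simp_all add: m2_def)
  have "m2 j = mem (Ob + j)" if j: "j < L" for j
  proof (cases "j \<le> g + R - 1")
    case True
    then show ?thesis using shift(1) m1(4) Ob R by auto
  next
    case False
    then show ?thesis using shift(2) m1(3) j R by auto
  qed
  moreover have "reaches P (pc + 13, m1) (3 * (g + R - 1) + 1) (pc + 13 + (3 * (g + R - 1) + 1), m2)"
    using reaches_straight[OF atS shift_down_prog_straight, of m1] by (simp add: m2_def)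
  ultimately show ?thesis
    using reaches_trans[OF m1(1)] by blast
qed

lemma fill_progs_correct:
  assumes at: "code_at P pc (count_pos_prog g pc @ select_prog g (pc + 13) @ flag_prog g (pc + 36))" and g: "3 \<le> g"
    and r: "mem g = 0" "mem (g+1) = 1" "mem (g+2) = n" "mem 0 = m" "mem (g+12) = Cb" "mem 2 = kk"
    and Cb: "g + 23 \<le> Cb"
  defines "cn \<equiv> \<lambda>c. mem (Cb + c)"
  defines "s \<equiv> card {c. c < m \<and> n < 2 * cn c}"
  shows "\<exists>mem'. reaches P (pc, mem) (m * 25 + 17) (pc + 46, mem') \<and>
     mem' g = 0 \<and> mem' (g+1) = 1 \<and> mem' (g+21) = Cb + m \<and> mem' (g+22) = Suc m \<and>
     mem' (Cb + m) = (if s \<le> kk \<and> (kk - s) - tie_count cn n m = 0 then 1 else 0) \<and>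
     (\<forall>c<m. mem' (Cb + m + 1 + c) = select_bit cn n (kk - s) c)"
proof -
  have at1: "code_at P pc (count_pos_prog g pc)" and at2: "code_at P (pc + 13) (select_prog g (pc + 13))"
    and at3: "code_at P (pc + 36) (flag_prog g (pc + 36))"
    using at by (simp_all add: code_at_append add.assoc)
  obtain mem1 where 1: "reaches P (pc, mem) (4 + (m * 9 + 1)) (pc + 13, mem1)"
      "mem1 (g+21) = Cb + m" "mem1 (g+18) = s"
      "\<forall>a. a \<notin> {g+4, g+14, g+15, g+18, g+21} \<longrightarrow> mem1 a = mem a"
    using count_pos_prog_correct[OF at1 _ r(1-5) Cb] g by (auto simp: s_def cn_def)
  have r1: "mem1 g = 0" "mem1 (g+1) = 1" "mem1 (g+2) = n" "mem1 0 = m" "mem1 (g+12) = Cb" "mem1 2 = kk"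
    and cn1: "\<And>c. mem1 (Cb + c) = cn c"
    using 1(4) r Cb by (auto simp: cn_def)
  obtain mem2 where 2: "reaches P (pc + 13, mem1) (4 + (m * 16 + 1)) (pc + 36, mem2)"
      "mem2 (g+19) = (kk - s) - tie_count cn n m" "\<forall>c<m. mem2 (Cb + m + 1 + c) = select_bit cn n (kk - s) c"
      "\<forall>a. a \<notin> {g+4, g+14, g+15, g+17, g+19, g+20} \<and> (a < Cb + m + 1 \<or> Cb + m + 1 + m \<le> a) \<longrightarrow>
         mem2 a = mem1 a"
    using select_prog_correct[OF at2 g r1(1-5) 1(2) r1(6) 1(3) Cb] cn1 by (simp add: add.assoc) blast
  have r2: "mem2 g = 0" "mem2 (g+1) = 1" "mem2 0 = m" "mem2 (g+18) = s" "mem2 2 = kk" "mem2 (g+21) = Cb + m"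
    using 2(4) r1 1(2,3) Cb by auto
  define flag where "flag = (if s \<le> kk \<and> (kk - s) - tie_count cn n m = 0 then 1 else (0::nat))"
  have 3: "reaches P (pc + 36, mem2) 7 (pc + 46, mem2(Cb + m := flag, g + 4 := Suc 0, g + 22 := Suc m))"
    using flag_prog_correct[OF at3 g r2(1-5) 2(2) r2(6)] Cb by (simp add: add.assoc flag_def)
  have "reaches P (pc, mem) (m * 25 + 17) (pc + 46, mem2(Cb + m := flag, g + 4 := Suc 0, g + 22 := Suc m))"
    using reaches_trans[OF reaches_trans[OF 1(1) 2(1)] 3] by (simp add: algebra_simps)
  moreover have "Cb + m + 1 + c \<noteq> Cb + m" "Cb + m + 1 + c \<noteq> g + 4" "Cb + m + 1 + c \<noteq> g + 22" for c
    using Cb by auto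
  ultimately show ?thesis
    using 2(3) r2 Cb by (intro exI[of _ "mem2(Cb + m := flag, g + 4 := Suc 0, g + 22 := Suc m)"]) (simp add: flag_def)
qed

section \<open>The two algorithms\<close>

lemma enc_election_cell_bound: "2 \<le> off \<Longrightarrow> off \<le> a \<Longrightarrow> enc_election off m V a \<le> 1"
  by (simp add: enc_election_def)

lemma enc_election_approval:
  assumes "2 \<le> off" "c < m" "i < length V"
  shows "enc_election off m V (off + (i * m + c)) = (if c \<in> V ! i then 1 else 0)"
proof -
  have "i * m + c < length V * m" using add_mult_less_mult[OF assms(2,3)] by (simp add: add.commute)
  moreover have "(i * m + c) mod m = c" "(i * m + c) div m = i" using assms(2) by simp_all
  ultimately show ?thesis using assms by (simp add: enc_election_def)
qed

lemma sum_approval_indicator: "(\<Sum>i<length V. if c \<in> V ! i then 1 else 0) = approvals V c"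
proof (induction V)
  case (Cons v V)
  then show ?case
    by (simp only: length_Cons sum.lessThan_Suc_shift nth_Cons_0 nth_Cons_Suc) (simp add: approvals_def)
qed (simp add: approvals_def)

lemma count_prog_approvals:
  assumes at: "code_at P 0 (count_prog g 24 @ rest)" and g: "2 \<le> g"
    and mem0: "\<forall>a. a < 2 \<or> g \<le> a \<longrightarrow> mem0 a = enc_election g m V a"
  defines "Cb \<equiv> 2 * (length V * m) + g + 48"
  shows "\<exists>mem. reaches P (0, mem0) (count_time m (length V) 24) (337, mem) \<and>
     mem g = 0 \<and> mem (g+1) = 1 \<and> mem (g+2) = length V \<and> mem 0 = m \<and> mem (g+12) = Cb \<and>
     (\<forall>a. 2 \<le> a \<and> a < g \<longrightarrow> mem a = mem0 a) \<and> (\<forall>c<m. mem (Cb + c) = approvals V c)"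
proof -
  have "mem0 0 = m" "mem0 1 = length V" "\<forall>a\<ge>g. mem0 a \<le> 1"
    using mem0 g enc_election_cell_bound[OF g] by (auto simp: enc_election_def)
  from count_prog_correct[OF at g _ this] obtain mem where
    F: "reaches P (0, mem0) (count_time m (length V) 24) (337, mem)"
      "mem g = 0" "mem (g+1) = 1" "mem (g+2) = length V" "mem 0 = m" "mem (g+12) = Cb"
      "\<forall>a. 2 \<le> a \<and> a < g \<longrightarrow> mem a = mem0 a"
      "\<forall>c<m. mem (Cb + c) = (\<Sum>i<length V. mem0 (g + (i*m + c)))"
    by (auto simp: Cb_def)
  have "mem (Cb + c) = approvals V c" if c: "c < m" for c
  proof -
    have "mem0 (g + (i*m + c)) = (if c \<in> V ! i then 1 else 0)" if "i < length V" for i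
      using mem0 enc_election_approval[OF g c that] by simp
    then show ?thesis
      using F(8) c by (simp add: sum_approval_indicator[symmetric])
  qed
  with F show ?thesis by blast
qed

definition min_winner_prog :: "instr list" where
  "min_winner_prog = count_prog 2 24 @ threshold_prog 2 337 @ output_prog 2 24 354 @ shift_down_prog 25 @ [Halt]"

lemma min_winner_prog_correct:
  "\<exists>t mem. t \<le> 1000 * election_size m V \<and> runs_within min_winner_prog (enc_election 2 m V) t mem \<and>
     dec_committee 0 m mem = pos_weight {0..<m} V"
proof -
  define n where "n = length V"
  define Cb where "Cb = 2 * (n * m) + 2 + 48"
  have at0: "code_at min_winner_prog 0 (count_prog 2 24 @ threshold_prog 2 337 @ output_prog 2 24 354 @ shift_down_prog 25 @ [Halt])"
    and atG: "code_at min_winner_prog 337 (threshold_prog 2 337)"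
    and atZ: "code_at min_winner_prog 354 (output_prog 2 24 354 @ shift_down_prog (2 + 24 - 1) @ [Halt])"
    and atH: "code_at min_winner_prog 443 [Halt]"
    using code_at_self[of min_winner_prog] by (simp_all add: min_winner_prog_def code_at_append length_count_prog)
  obtain memF where F: "reaches min_winner_prog (0, enc_election 2 m V) (count_time m n 24) (337, memF)"
      "memF 2 = 0" "memF (2+1) = 1" "memF (2+2) = n" "memF 0 = m" "memF (2+12) = Cb"
      "\<forall>c<m. memF (Cb + c) = approvals V c"
    using count_prog_approvals[OF at0 order.refl, of "enc_election 2 m V" m V] by (auto simp: n_def Cb_def)
  obtain memG where G: "reaches min_winner_prog (337, memF) (4 + (m * 11 + 2)) (354, memG)"
      "memG (2+21) = Cb + m" "memG (2+22) = m"
      "\<forall>c<m. memG (Cb + m + c) = (if n < 2 * memF (Cb + c) then 1 else 0)"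
      "\<forall>a. a \<notin> {2+4, 2+14, 2+15, 2+17, 2+21, 2+22} \<and> a < Cb + m \<longrightarrow> memG a = memF a"
    using threshold_prog_correct[OF atG order.refl F(2-6)] by (auto simp: Cb_def)
  have GZ: "memG 2 = 0" "memG (2+1) = 1"
    using G(5) F(2,3) by (auto simp: Cb_def)
  obtain memZ where Z: "reaches min_winner_prog (354, memG) (4 + ((m - 26) * 7 + 3) + 76) (443, memZ)"
      "\<forall>j<m. memZ j = memG (Cb + m + j)"
    using output_shift_correct[OF atZ _ _ GZ G(3,2)] by (auto simp: Cb_def)
  have "reaches min_winner_prog (0, enc_election 2 m V)
      (count_time m n 24 + (4 + (m * 11 + 2)) + (4 + ((m - 26) * 7 + 3) + 76)) (443, memZ)"
    using reaches_trans[OF reaches_trans[OF F(1) G(1)] Z(1)] by simp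
  then obtain t where t: "t \<le> count_time m n 24 + (4 + (m * 11 + 2)) + (4 + ((m - 26) * 7 + 3) + 76)"
      "runs_within min_winner_prog (enc_election 2 m V) t memZ"
    using reaches_halt_runs_within[OF _ atH] by blast
  moreover have "count_time m n 24 + (4 + (m * 11 + 2)) + (4 + ((m - 26) * 7 + 3) + 76) \<le> 1000 * election_size m V"
  proof -
    have "m - 26 \<le> m" "election_size m V = m * n + m + n + 1"
      by (simp_all add: election_size_def n_def algebra_simps)
    then show ?thesis by (simp add: count_time_def algebra_simps)
  qed
  moreover have "dec_committee 0 m memZ = pos_weight {0..<m} V"
  proof -
    have "memZ c \<noteq> 0 \<longleftrightarrow> 0 < nav_weight V c" if "c < m" for c
      using that Z(2) G(4) F(7) by (simp add: nav_weight_def n_def)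
    then show ?thesis by (auto simp: dec_committee_def pos_weight_def)
  qed
  ultimately show ?thesis by (meson order.trans)
qed

definition size_winner_prog :: "instr list" where
  "size_winner_prog = count_prog 3 24 @ count_pos_prog 3 337 @ select_prog 3 350 @ flag_prog 3 373 @ output_prog 3 24 383 @ shift_down_prog 26 @ [Halt]"

lemma size_winner_prog_correct:
  "\<exists>t mem. t \<le> 1000 * election_size m V \<and> runs_within size_winner_prog ((enc_election 3 m V)(2 := k)) t mem \<and>
     (mem 0 \<noteq> 0 \<longleftrightarrow> card (pos_weight {0..<m} V) \<le> k \<and> k \<le> card (nonneg_weight {0..<m} V)) \<and>
     dec_committee 1 m mem = fill_committee m V (k - card (pos_weight {0..<m} V))"
proof -
  define n where "n = length V"
  define Cb where "Cb = 2 * (n * m) + 3 + 48"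
  define s where "s = card (pos_weight {0..<m} V)"
  have at0: "code_at size_winner_prog 0 (count_prog 3 24 @ count_pos_prog 3 337 @ select_prog 3 350 @ flag_prog 3 373 @ output_prog 3 24 383 @ shift_down_prog 26 @ [Halt])"
    and atS: "code_at size_winner_prog 337 (count_pos_prog 3 337 @ select_prog 3 (337 + 13) @ flag_prog 3 (337 + 36))"
    and atZ: "code_at size_winner_prog 383 (output_prog 3 24 383 @ shift_down_prog (3 + 24 - 1) @ [Halt])"
    and atH: "code_at size_winner_prog 475 [Halt]"
    using code_at_self[of size_winner_prog] by (simp_all add: size_winner_prog_def code_at_append length_count_prog)
  obtain memF where F: "reaches size_winner_prog (0, (enc_election 3 m V)(2 := k)) (count_time m n 24) (337, memF)"
      "memF 3 = 0" "memF (3+1) = 1" "memF (3+2) = n" "memF 0 = m" "memF (3+12) = Cb" "memF 2 = k"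
      "\<forall>c<m. memF (Cb + c) = approvals V c"
    using count_prog_approvals[OF at0, of "(enc_election 3 m V)(2 := k)" m V] by (auto simp: n_def Cb_def)
  define cn where "cn = (\<lambda>c. memF (Cb + c))"
  have s: "card {c. c < m \<and> n < 2 * cn c} = s"
    using F(8) by (auto simp: s_def cn_def pos_weight_def nav_weight_def n_def intro: arg_cong[where f=card])
  obtain memS where S: "reaches size_winner_prog (337, memF) (m * 25 + 17) (383, memS)"
      "memS 3 = 0" "memS (3+1) = 1" "memS (3+21) = Cb + m" "memS (3+22) = Suc m"
      "memS (Cb + m) = (if s \<le> k \<and> (k - s) - tie_count cn n m = 0 then 1 else 0)"
      "\<forall>c<m. memS (Cb + m + 1 + c) = select_bit cn n (k - s) c"
    using fill_progs_correct[OF atS _ F(2-7)] s by (auto simp: Cb_def cn_def)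
  obtain memZ where Z: "reaches size_winner_prog (383, memS) (4 + ((m + 1 - 27) * 7 + 3) + 79) (475, memZ)"
      "\<forall>j<Suc m. memZ j = memS (Cb + m + j)"
    using output_shift_correct[OF atZ _ _ S(2,3,5,4)] by (auto simp: Cb_def)
  have "reaches size_winner_prog (0, (enc_election 3 m V)(2 := k))
      (count_time m n 24 + (m * 25 + 17) + (4 + ((m + 1 - 27) * 7 + 3) + 79)) (475, memZ)"
    using reaches_trans[OF reaches_trans[OF F(1) S(1)] Z(1)] by simp
  then obtain t where t: "t \<le> count_time m n 24 + (m * 25 + 17) + (4 + ((m + 1 - 27) * 7 + 3) + 79)"
      "runs_within size_winner_prog ((enc_election 3 m V)(2 := k)) t memZ"
    using reaches_halt_runs_within[OF _ atH] by blast
  have time: "count_time m n 24 + (m * 25 + 17) + (4 + ((m + 1 - 27) * 7 + 3) + 79) \<le> 1000 * election_size m V"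
  proof -
    have "m + 1 - 27 \<le> m" "election_size m V = m * n + m + n + 1"
      by (simp_all add: election_size_def n_def algebra_simps)
    then show ?thesis by (simp add: count_time_def algebra_simps)
  qed
  have ties: "tie_count cn n c = card {c'. c' < c \<and> nav_weight V c' = 0}" if "c \<le> m" for c
    unfolding tie_count_def using that F(8)
    by (intro arg_cong[where f=card]) (auto simp: cn_def nav_weight_def n_def)
  have "s \<le> card (nonneg_weight {0..<m} V)"
    unfolding s_def using pos_weight_subset_nonneg_weight by (rule card_mono[rotated]) (simp add: nonneg_weight_def)
  then have flag: "memZ 0 \<noteq> 0 \<longleftrightarrow> s \<le> k \<and> k \<le> card (nonneg_weight {0..<m} V)"
    using Z(2) S(6) ties[of m] by (auto simp: card_zero_weight s_def)
  have "memZ (Suc c) \<noteq> 0 \<longleftrightarrow> c \<in> fill_committee m V (k - s)" if "c < m" for c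
    using that Z(2) S(7) ties[of c] F(8)
    by (auto simp: select_bit_def cn_def fill_committee_def pos_weight_def nav_weight_def n_def)
  then have "dec_committee 1 m memZ = fill_committee m V (k - s)"
    by (auto simp: dec_committee_def fill_committee_def pos_weight_def)
  then show ?thesis
    using t(2) order.trans[OF t(1) time] flag unfolding s_def by blast
qed

theorem mainTheorem3:
  shows
  "(\<exists>P a d. \<forall>m V. valid_election m V \<longrightarrow>
      (\<exists>t mem. t \<le> a * election_size m V ^ d \<and>
         runs_within P (enc_election 2 m V) t mem \<and>
         (let S = dec_committee 0 m mem in
            nav_winner {0..<m} V S \<and>
            (\<forall>T. nav_winner {0..<m} V T \<and> card T \<le> card S \<longrightarrow> T = S))))
   \<and>
   (\<exists>P a d. \<forall>m V k. valid_election m V \<longrightarrow>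
      (\<exists>t mem. t \<le> a * election_size m V ^ d \<and>
         runs_within P ((enc_election 3 m V)(2 := k)) t mem \<and>
         (if (\<exists>S. nav_winner {0..<m} V S \<and> card S = k)
          then mem 0 \<noteq> 0 \<and> nav_winner {0..<m} V (dec_committee 1 m mem)
                 \<and> card (dec_committee 1 m mem) = k
          else mem 0 = 0)))"
proof (rule conjI[OF exI[of _ min_winner_prog] exI[of _ size_winner_prog]]; rule exI[of _ 1000], rule exI[of _ 1], intro allI impI)
  fix m V
  assume "valid_election m V"
  obtain t mem where "t \<le> 1000 * election_size m V" "runs_within min_winner_prog (enc_election 2 m V) t mem"
    "dec_committee 0 m mem = pos_weight {0..<m} V"
    using min_winner_prog_correct by blast
  then show "\<exists>t mem. t \<le> 1000 * election_size m V ^ 1 \<and> runs_within min_winner_prog (enc_election 2 m V) t mem \<and>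
      (let S = dec_committee 0 m mem in
         nav_winner {0..<m} V S \<and> (\<forall>T. nav_winner {0..<m} V T \<and> card T \<le> card S \<longrightarrow> T = S))"
    using nav_winner_pos_weight[of "{0..<m}" V] nav_winner_card_le_pos_weight[of "{0..<m}" V]
    by (intro exI[of _ t] exI[of _ mem]) (auto simp: Let_def)
next
  fix m V k
  assume "valid_election m V"
  obtain t mem where "t \<le> 1000 * election_size m V" "runs_within size_winner_prog ((enc_election 3 m V)(2 := k)) t mem"
    "mem 0 \<noteq> 0 \<longleftrightarrow> card (pos_weight {0..<m} V) \<le> k \<and> k \<le> card (nonneg_weight {0..<m} V)"
    "dec_committee 1 m mem = fill_committee m V (k - card (pos_weight {0..<m} V))"
    using size_winner_prog_correct by blast
  then show "\<exists>t mem. t \<le> 1000 * election_size m V ^ 1 \<and> runs_within size_winner_prog ((enc_election 3 m V)(2 := k)) t mem \<and>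
      (if \<exists>S. nav_winner {0..<m} V S \<and> card S = k
       then mem 0 \<noteq> 0 \<and> nav_winner {0..<m} V (dec_committee 1 m mem) \<and> card (dec_committee 1 m mem) = k
       else mem 0 = 0)"
    using ex_nav_winner_card_iff[of "{0..<m}" V k] nav_winner_fill_committee fill_committee_card_eq
    by (intro exI[of _ t] exI[of _ mem]) auto
qed

end
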